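(* If $\Sigma\subseteq\mathcal L$ is finite and closed under subformulas, then the canonical quasimodel $\mathfrak C/\Sigma$ is a $\Sigma$-quasimodel; in particular its relation $R^+$ is $\omega$-sensible.
   Context: $\mathcal L$: formulas with $\wedge,\vee,\Rightarrow,\Leftarrow,\mathsf X,\mathsf Y,\mathsf G,\mathsf H,\mathsf U,\mathsf S$; $\top:=p_0\Rightarrow p_0$, $\bot:=p_0\Leftarrow p_0$, $\neg\varphi:=\varphi\Rightarrow\bot$. $\mathsf{GTL}$ is the Hilbert calculus: substitution instances of intuitionistic tautologies; $\varphi\Rightarrow(\psi\vee(\varphi\Leftarrow\psi))$; $(\varphi\Rightarrow\psi)\vee(\psi\Rightarrow\varphi)$; $\neg((\varphi\Leftarrow\psi)\wedge(\psi\Leftarrow\varphi))$; $\neg\mathsf X\bot$, $\mathsf X(\varphi\vee\psi)\Rightarrow(\mathsf X\varphi\vee\mathsf X\psi)$, $(\mathsf X\varphi\wedge\mathsf X\psi)\Rightarrow\mathsf X(\varphi\wedge\psi)$, $\mathsf X(\varphi\Rightarrow\psi)\Leftrightarrow(\mathsf X\varphi\Rightarrow\mathsf X\psi)$, $\mathsf G(\varphi\Rightarrow\psi)\Rightarrow(\mathsf G\varphi\Rightarrow\mathsf G\psi)$, $\mathsf G(\varphi\Rightarrow\psi)\Rightarrow(\theta\,\mathsf U\,\varphi\Rightarrow\theta\,\mathsf U\,\psi)$, $\mathsf G(\varphi\Rightarrow\psi)\Rightarrow(\varphi\,\mathsf U\,\theta\Rightarrow\psi\,\mathsf U\,\theta)$,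 $\mathsf G\varphi\Rightarrow\varphi\wedge\mathsf X\mathsf G\varphi$, $\psi\vee(\varphi\wedge\mathsf X(\varphi\,\mathsf U\,\psi))\Rightarrow\varphi\,\mathsf U\,\psi$, $\mathsf G(\varphi\Rightarrow\mathsf X\varphi)\Rightarrow(\varphi\Rightarrow\mathsf G\varphi)$, $\mathsf G(\psi\wedge\mathsf X\varphi\Rightarrow\varphi)\Rightarrow(\psi\,\mathsf U\,\varphi\Rightarrow\varphi)$ and their past versions (with $\mathsf Y,\mathsf H,\mathsf S$); $\varphi\Leftrightarrow\mathsf X\mathsf Y\varphi$, $\varphi\Leftrightarrow\mathsf Y\mathsf X\varphi$; rules: from $\varphi\Rightarrow\psi$ infer $(\varphi\Leftarrow\theta)\Rightarrow(\psi\Leftarrow\theta)$; from $\varphi\Rightarrow\psi\vee\gamma$ infer $(\varphi\Leftarrow\psi)\Rightarrow\gamma$; modus ponens; necessitation for $\mathsf X,\mathsf Y,\mathsf G,\mathsf H$. $\Gamma\vdash\Delta$ iff $\bigwedge\Gamma'\Rightarrow\bigvee\Delta'\in\mathsf{GTL}$ for finite $\Gamma'\subseteq\Gamma,\Delta'\subseteq\Delta$. $\Sigma$-types, $\Sigma$-labelled spaces, convex/fully confluent/bi-serial/sensible relations, $\Sigma$-labelled systems: for subformula-closed $\Sigma$, a $\Sigma$-type is $\Phi\subseteq\Sigma$ with the Boolean closure conditions for $\wedge,\vee$, ($\varphi\Rightarrow\psi\in\Phi$ implies $\varphi\notin\Phi$ or $\psi\in\Phi$; $\psi\in\Phi$ implies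 $\varphi\Rightarrow\psi\in\Phi$), ($\varphi\Leftarrow\psi\in\Phi$ implies $\varphi\in\Phi$; $\varphi\in\Phi,\psi\notin\Phi$ imply $\varphi\Leftarrow\psi\in\Phi$). A $\Sigma$-labelled space is $(W,\le,\ell)$ with $(W,\le)$ a disjoint union of linear posets, $\ell$ into $\Sigma$-types, $w\le v\Rightarrow\ell(w)\supseteq\ell(v)$, $\Rightarrow$-formulas outside $\ell(w)$ witnessed at some $v\le w$ ($\varphi\in\ell(v),\psi\notin\ell(v)$), $\Leftarrow$-formulas in $\ell(w)$ witnessed at some $v\ge w$. A relation $R$ is convex (images/preimages of points convex), fully confluent (forth–down: $x\le x'Ry'\Rightarrow\exists y\,xRy\le y'$; forth–up: $x'\ge xRy\Rightarrow\exists y'\,x'Ry'\ge y$; back–down: $x'Ry'\ge y\Rightarrow\exists x\,x'\ge xRy$; back–up: $xRy\le y'\Rightarrow\exists x'\,x\le x'Ry'$), bi-serial, and sensible (for each $wRv$: $\mathsf X\varphi\in\ell(w)\iff\varphi\in\ell(v)$; $\mathsf Y\varphi\in\ell(v)\iff\varphi\in\ell(w)$; $\mathsf G\varphi\in\ell(w)\iff\varphi\in\ell(w)\wedge\mathsf G\varphi\in\ell(v)$; $\mathsf H\varphi\in\ell(v)\iff\varphi\in\ell(v)\wedge\mathsf H\varphi\in\ell(w)$; $\varphi\,\mathsf U\,\psi\in\ell(w)\iff\psi\in\ell(w)\vee(\varphi\in\ell(w)\wedge\varphi\,\mathsf U\,\psi\in\ell(v))$; $\varphi\,\mathsf S\,\psi\in\ell(v)\iff\psi\in\ell(v)\vee(\varphi\in\ell(v)\wedge\varphi\,\mathsf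 S\,\psi\in\ell(w))$, for formulas in $\Sigma$). Labelled system: labelled space plus such a relation. $\omega$-sensible: $\mathsf G\varphi\in\Sigma\setminus\ell(w)$ gives $v$ with $wR^nv$, $\varphi\notin\ell(v)$; $\mathsf H\varphi\in\Sigma\setminus\ell(w)$ gives $v$ with $vR^nw$, $\varphi\notin\ell(v)$; $\varphi\,\mathsf U\,\psi\in\ell(w)$ gives $v$ with $wR^nv$, $\psi\in\ell(v)$; $\varphi\,\mathsf S\,\psi\in\ell(w)$ gives $v$ with $vR^nw$, $\psi\in\ell(v)$ ($n\ge0$). A $\Sigma$-quasimodel is a $\Sigma$-labelled system with $\omega$-sensible relation. Canonical quasimodel: $\mathrm{Type}_\infty$ is the set of $\mathcal L$-types $\Phi$ with $\Phi\nvdash\mathcal L\setminus\Phi$; $\Phi\le\Psi$ iff $\Phi\supseteq\Psi$; $\ell(\Phi)=\Phi\cap\Sigma$; $S(\Phi)=\{\varphi:\mathsf X\varphi\in\Phi\}$. $\mathfrak C/\Sigma$ is the quotient: $L(\Phi)=\{\ell(\Psi):\Psi\le\Phi$ or $\Phi\le\Psi\}$; $\Phi\sim\Psi$ iff $\ell$ and $L$ agree; $[\Phi]\le[\Psi]$ iff $L(\Phi)=L(\Psi)$ and $\ell(\Phi)\supseteq\ell(\Psi)$; $\ell([\Phi])=\ell(\Phi)$; $R_0$ smallest with $[\Phi]R_0[S(\Phi)]$; $XR^+Y$ iff there are $X_1\le X\le X_2$, $Y_1\le Y\le Y_2$ with $X_2R_0Y_1$ and $X_1R_0Y_2$. *)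

theory Defs
  imports Main
begin

datatype fm =
    Atom nat
  | And fm fm
  | Or fm fm
  | Imp fm fm
  | Coimp fm fm
  | TX fm | TY fm | TG fm | TH fm
  | TU fm fm
  | TS fm fm

definition top :: fm where "top = Imp (Atom 0) (Atom 0)"
definition bot :: fm where "bot = Coimp (Atom 0) (Atom 0)"
definition neg :: "fm \<Rightarrow> fm" where "neg \<phi> = Imp \<phi> bot"
definition iff :: "fm \<Rightarrow> fm \<Rightarrow> fm" where "iff \<phi> \<psi> = And (Imp \<phi> \<psi>) (Imp \<psi> \<phi>)"

fun subfs :: "fm \<Rightarrow> fm set" where
  "subfs (Atom n) = {Atom n}"
| "subfs (And a b) = insert (And a b) (subfs a \<union> subfs b)"
| "subfs (Or a b) = insert (Or a b) (subfs a \<union> subfs b)"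
| "subfs (Imp a b) = insert (Imp a b) (subfs a \<union> subfs b)"
| "subfs (Coimp a b) = insert (Coimp a b) (subfs a \<union> subfs b)"
| "subfs (TX a) = insert (TX a) (subfs a)"
| "subfs (TY a) = insert (TY a) (subfs a)"
| "subfs (TG a) = insert (TG a) (subfs a)"
| "subfs (TH a) = insert (TH a) (subfs a)"
| "subfs (TU a b) = insert (TU a b) (subfs a \<union> subfs b)"
| "subfs (TS a b) = insert (TS a b) (subfs a \<union> subfs b)"

definition subformula_closed :: "fm set \<Rightarrow> bool" where
  "subformula_closed \<Sigma> \<longleftrightarrow> (\<forall>\<phi>\<in>\<Sigma>. subfs \<phi> \<subseteq> \<Sigma>)"

datatype ipf = IVar nat | IBot | IAnd ipf ipf | IOr ipf ipf | IImp ipf ipf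

inductive ipc :: "ipf \<Rightarrow> bool" where
  ipc_K: "ipc (IImp a (IImp b a))"
| ipc_S: "ipc (IImp (IImp a (IImp b c)) (IImp (IImp a b) (IImp a c)))"
| ipc_and1: "ipc (IImp (IAnd a b) a)"
| ipc_and2: "ipc (IImp (IAnd a b) b)"
| ipc_and3: "ipc (IImp a (IImp b (IAnd a b)))"
| ipc_or1: "ipc (IImp a (IOr a b))"
| ipc_or2: "ipc (IImp b (IOr a b))"
| ipc_or3: "ipc (IImp (IImp a c) (IImp (IImp b c) (IImp (IOr a b) c)))"
| ipc_efq: "ipc (IImp IBot a)"
| ipc_mp: "ipc (IImp a b) \<Longrightarrow> ipc a \<Longrightarrow> ipc b"

fun isubst :: "(nat \<Rightarrow> fm) \<Rightarrow> ipf \<Rightarrow> fm" where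
  "isubst \<sigma> (IVar n) = \<sigma> n"
| "isubst \<sigma> IBot = bot"
| "isubst \<sigma> (IAnd a b) = And (isubst \<sigma> a) (isubst \<sigma> b)"
| "isubst \<sigma> (IOr a b) = Or (isubst \<sigma> a) (isubst \<sigma> b)"
| "isubst \<sigma> (IImp a b) = Imp (isubst \<sigma> a) (isubst \<sigma> b)"

inductive gtl :: "fm \<Rightarrow> bool" where
  int_taut: "ipc f \<Longrightarrow> gtl (isubst \<sigma> f)"
| ax_coimp: "gtl (Imp \<phi> (Or \<psi> (Coimp \<phi> \<psi>)))"
| ax_lin: "gtl (Or (Imp \<phi> \<psi>) (Imp \<psi> \<phi>))"
| ax_coimp_neg: "gtl (neg (And (Coimp \<phi> \<psi>) (Coimp \<psi> \<phi>)))"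
| ax_X_bot: "gtl (neg (TX bot))"
| ax_X_or: "gtl (Imp (TX (Or \<phi> \<psi>)) (Or (TX \<phi>) (TX \<psi>)))"
| ax_X_and: "gtl (Imp (And (TX \<phi>) (TX \<psi>)) (TX (And \<phi> \<psi>)))"
| ax_X_imp: "gtl (iff (TX (Imp \<phi> \<psi>)) (Imp (TX \<phi>) (TX \<psi>)))"
| ax_G_K: "gtl (Imp (TG (Imp \<phi> \<psi>)) (Imp (TG \<phi>) (TG \<psi>)))"
| ax_G_U2: "gtl (Imp (TG (Imp \<phi> \<psi>)) (Imp (TU \<theta> \<phi>) (TU \<theta> \<psi>)))"
| ax_G_U1: "gtl (Imp (TG (Imp \<phi> \<psi>)) (Imp (TU \<phi> \<theta>) (TU \<psi> \<theta>)))"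
| ax_G_fix: "gtl (Imp (TG \<phi>) (And \<phi> (TX (TG \<phi>))))"
| ax_U_fix: "gtl (Imp (Or \<psi> (And \<phi> (TX (TU \<phi> \<psi>)))) (TU \<phi> \<psi>))"
| ax_G_ind: "gtl (Imp (TG (Imp \<phi> (TX \<phi>))) (Imp \<phi> (TG \<phi>)))"
| ax_U_ind: "gtl (Imp (TG (Imp (And \<psi> (TX \<phi>)) \<phi>)) (Imp (TU \<psi> \<phi>) \<phi>))"
| ax_Y_bot: "gtl (neg (TY bot))"
| ax_Y_or: "gtl (Imp (TY (Or \<phi> \<psi>)) (Or (TY \<phi>) (TY \<psi>)))"
| ax_Y_and: "gtl (Imp (And (TY \<phi>) (TY \<psi>)) (TY (And \<phi> \<psi>)))"
| ax_Y_imp: "gtl (iff (TY (Imp \<phi> \<psi>)) (Imp (TY \<phi>) (TY \<psi>)))"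
| ax_H_K: "gtl (Imp (TH (Imp \<phi> \<psi>)) (Imp (TH \<phi>) (TH \<psi>)))"
| ax_H_S2: "gtl (Imp (TH (Imp \<phi> \<psi>)) (Imp (TS \<theta> \<phi>) (TS \<theta> \<psi>)))"
| ax_H_S1: "gtl (Imp (TH (Imp \<phi> \<psi>)) (Imp (TS \<phi> \<theta>) (TS \<psi> \<theta>)))"
| ax_H_fix: "gtl (Imp (TH \<phi>) (And \<phi> (TY (TH \<phi>))))"
| ax_S_fix: "gtl (Imp (Or \<psi> (And \<phi> (TY (TS \<phi> \<psi>)))) (TS \<phi> \<psi>))"
| ax_H_ind: "gtl (Imp (TH (Imp \<phi> (TY \<phi>))) (Imp \<phi> (TH \<phi>)))"
| ax_S_ind: "gtl (Imp (TH (Imp (And \<psi> (TY \<phi>)) \<phi>)) (Imp (TS \<psi> \<phi>) \<phi>))"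
| ax_XY: "gtl (iff \<phi> (TX (TY \<phi>)))"
| ax_YX: "gtl (iff \<phi> (TY (TX \<phi>)))"
| rule_coimp_mono: "gtl (Imp \<phi> \<psi>) \<Longrightarrow> gtl (Imp (Coimp \<phi> \<theta>) (Coimp \<psi> \<theta>))"
| rule_coimp_res: "gtl (Imp \<phi> (Or \<psi> \<gamma>)) \<Longrightarrow> gtl (Imp (Coimp \<phi> \<psi>) \<gamma>)"
| mp: "gtl (Imp \<phi> \<psi>) \<Longrightarrow> gtl \<phi> \<Longrightarrow> gtl \<psi>"
| nec_X: "gtl \<phi> \<Longrightarrow> gtl (TX \<phi>)"
| nec_Y: "gtl \<phi> \<Longrightarrow> gtl (TY \<phi>)"
| nec_G: "gtl \<phi> \<Longrightarrow> gtl (TG \<phi>)"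
| nec_H: "gtl \<phi> \<Longrightarrow> gtl (TH \<phi>)"

fun conjs :: "fm list \<Rightarrow> fm" where
  "conjs [] = top"
| "conjs (x # xs) = And x (conjs xs)"

fun disjs :: "fm list \<Rightarrow> fm" where
  "disjs [] = bot"
| "disjs (x # xs) = Or x (disjs xs)"

definition derives :: "fm set \<Rightarrow> fm set \<Rightarrow> bool" where
  "derives \<Gamma> \<Delta> \<longleftrightarrow> (\<exists>gs ds. set gs \<subseteq> \<Gamma> \<and> set ds \<subseteq> \<Delta> \<and> gtl (Imp (conjs gs) (disjs ds)))"

definition is_type :: "fm set \<Rightarrow> fm set \<Rightarrow> bool" where
  "is_type \<Sigma> \<Phi> \<longleftrightarrow> \<Phi> \<subseteq> \<Sigma> \<and>
     (\<forall>\<phi> \<psi>. And \<phi> \<psi> \<in> \<Sigma> \<longrightarrow> (And \<phi> \<psi> \<in> \<Phi> \<longleftrightarrow> \<phi> \<in> \<Phi> \<and> \<psi> \<in> \<Phi>)) \<and>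
     (\<forall>\<phi> \<psi>. Or \<phi> \<psi> \<in> \<Sigma> \<longrightarrow> (Or \<phi> \<psi> \<in> \<Phi> \<longleftrightarrow> \<phi> \<in> \<Phi> \<or> \<psi> \<in> \<Phi>)) \<and>
     (\<forall>\<phi> \<psi>. Imp \<phi> \<psi> \<in> \<Sigma> \<longrightarrow>
        (Imp \<phi> \<psi> \<in> \<Phi> \<longrightarrow> \<phi> \<notin> \<Phi> \<or> \<psi> \<in> \<Phi>) \<and> (\<psi> \<in> \<Phi> \<longrightarrow> Imp \<phi> \<psi> \<in> \<Phi>)) \<and>
     (\<forall>\<phi> \<psi>. Coimp \<phi> \<psi> \<in> \<Sigma> \<longrightarrow>
        (Coimp \<phi> \<psi> \<in> \<Phi> \<longrightarrow> \<phi> \<in> \<Phi>) \<and> (\<phi> \<in> \<Phi> \<and> \<psi> \<notin> \<Phi> \<longrightarrow> Coimp \<phi> \<psi> \<in> \<Phi>))"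

definition comparable :: "('a \<Rightarrow> 'a \<Rightarrow> bool) \<Rightarrow> 'a \<Rightarrow> 'a \<Rightarrow> bool" where
  "comparable le x y \<longleftrightarrow> le x y \<or> le y x"

text \<open>(W,\<le>) is a disjoint union of linear posets: a partial order in which
  comparability is transitive (the components are linearly ordered).\<close>
definition union_of_linear_posets :: "'a set \<Rightarrow> ('a \<Rightarrow> 'a \<Rightarrow> bool) \<Rightarrow> bool" where
  "union_of_linear_posets W le \<longleftrightarrow>
     (\<forall>x y. le x y \<longrightarrow> x \<in> W \<and> y \<in> W) \<and>
     (\<forall>x\<in>W. le x x) \<and>
     (\<forall>x\<in>W. \<forall>y\<in>W. le x y \<and> le y x \<longrightarrow> x = y) \<and>
     (\<forall>x\<in>W. \<forall>y\<in>W. \<forall>z\<in>W. le x y \<and> le y z \<longrightarrow> le x z) \<and>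
     (\<forall>x\<in>W. \<forall>y\<in>W. \<forall>z\<in>W. comparable le x y \<and> comparable le y z \<longrightarrow> comparable le x z)"

definition labelled_space :: "fm set \<Rightarrow> 'a set \<Rightarrow> ('a \<Rightarrow> 'a \<Rightarrow> bool) \<Rightarrow> ('a \<Rightarrow> fm set) \<Rightarrow> bool" where
  "labelled_space \<Sigma> W le lab \<longleftrightarrow>
     union_of_linear_posets W le \<and>
     (\<forall>w\<in>W. is_type \<Sigma> (lab w)) \<and>
     (\<forall>w\<in>W. \<forall>v\<in>W. le w v \<longrightarrow> lab v \<subseteq> lab w) \<and>
     (\<forall>w\<in>W. \<forall>\<phi> \<psi>. Imp \<phi> \<psi> \<in> \<Sigma> - lab w \<longrightarrow>
        (\<exists>v\<in>W. le v w \<and> \<phi> \<in> lab v \<and> \<psi> \<notin> lab v)) \<and>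
     (\<forall>w\<in>W. \<forall>\<phi> \<psi>. Coimp \<phi> \<psi> \<in> lab w \<longrightarrow>
        (\<exists>v\<in>W. le w v \<and> \<phi> \<in> lab v \<and> \<psi> \<notin> lab v))"

definition convex_set :: "'a set \<Rightarrow> ('a \<Rightarrow> 'a \<Rightarrow> bool) \<Rightarrow> 'a set \<Rightarrow> bool" where
  "convex_set W le A \<longleftrightarrow> (\<forall>a\<in>A. \<forall>b\<in>W. \<forall>c\<in>A. le a b \<and> le b c \<longrightarrow> b \<in> A)"

definition convex_rel :: "'a set \<Rightarrow> ('a \<Rightarrow> 'a \<Rightarrow> bool) \<Rightarrow> ('a \<Rightarrow> 'a \<Rightarrow> bool) \<Rightarrow> bool" where
  "convex_rel W le R \<longleftrightarrow>
     (\<forall>x\<in>W. convex_set W le {y\<in>W. R x y} \<and> convex_set W le {y\<in>W. R y x})"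

definition fully_confluent :: "'a set \<Rightarrow> ('a \<Rightarrow> 'a \<Rightarrow> bool) \<Rightarrow> ('a \<Rightarrow> 'a \<Rightarrow> bool) \<Rightarrow> bool" where
  "fully_confluent W le R \<longleftrightarrow>
     (\<forall>x\<in>W. \<forall>x'\<in>W. \<forall>y'\<in>W. le x x' \<and> R x' y' \<longrightarrow> (\<exists>y\<in>W. R x y \<and> le y y')) \<and>
     (\<forall>x\<in>W. \<forall>x'\<in>W. \<forall>y\<in>W. le x x' \<and> R x y \<longrightarrow> (\<exists>y'\<in>W. R x' y' \<and> le y y')) \<and>
     (\<forall>x'\<in>W. \<forall>y'\<in>W. \<forall>y\<in>W. R x' y' \<and> le y y' \<longrightarrow> (\<exists>x\<in>W. le x x' \<and> R x y)) \<and>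
     (\<forall>x\<in>W. \<forall>y\<in>W. \<forall>y'\<in>W. R x y \<and> le y y' \<longrightarrow> (\<exists>x'\<in>W. le x x' \<and> R x' y'))"

definition bi_serial :: "'a set \<Rightarrow> ('a \<Rightarrow> 'a \<Rightarrow> bool) \<Rightarrow> bool" where
  "bi_serial W R \<longleftrightarrow> (\<forall>x\<in>W. (\<exists>y\<in>W. R x y) \<and> (\<exists>y\<in>W. R y x))"

definition sensible :: "fm set \<Rightarrow> 'a set \<Rightarrow> ('a \<Rightarrow> fm set) \<Rightarrow> ('a \<Rightarrow> 'a \<Rightarrow> bool) \<Rightarrow> bool" where
  "sensible \<Sigma> W lab R \<longleftrightarrow> (\<forall>w\<in>W. \<forall>v\<in>W. R w v \<longrightarrow>
     (\<forall>\<phi>. TX \<phi> \<in> \<Sigma> \<longrightarrow> (TX \<phi> \<in> lab w \<longleftrightarrow> \<phi> \<in> lab v)) \<and>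
     (\<forall>\<phi>. TY \<phi> \<in> \<Sigma> \<longrightarrow> (TY \<phi> \<in> lab v \<longleftrightarrow> \<phi> \<in> lab w)) \<and>
     (\<forall>\<phi>. TG \<phi> \<in> \<Sigma> \<longrightarrow> (TG \<phi> \<in> lab w \<longleftrightarrow> \<phi> \<in> lab w \<and> TG \<phi> \<in> lab v)) \<and>
     (\<forall>\<phi>. TH \<phi> \<in> \<Sigma> \<longrightarrow> (TH \<phi> \<in> lab v \<longleftrightarrow> \<phi> \<in> lab v \<and> TH \<phi> \<in> lab w)) \<and>
     (\<forall>\<phi> \<psi>. TU \<phi> \<psi> \<in> \<Sigma> \<longrightarrow>
        (TU \<phi> \<psi> \<in> lab w \<longleftrightarrow> \<psi> \<in> lab w \<or> (\<phi> \<in> lab w \<and> TU \<phi> \<psi> \<in> lab v))) \<and>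
     (\<forall>\<phi> \<psi>. TS \<phi> \<psi> \<in> \<Sigma> \<longrightarrow>
        (TS \<phi> \<psi> \<in> lab v \<longleftrightarrow> \<psi> \<in> lab v \<or> (\<phi> \<in> lab v \<and> TS \<phi> \<psi> \<in> lab w))))"

definition omega_sensible :: "fm set \<Rightarrow> 'a set \<Rightarrow> ('a \<Rightarrow> fm set) \<Rightarrow> ('a \<Rightarrow> 'a \<Rightarrow> bool) \<Rightarrow> bool" where
  "omega_sensible \<Sigma> W lab R \<longleftrightarrow> (\<forall>w\<in>W.
     (\<forall>\<phi>. TG \<phi> \<in> \<Sigma> - lab w \<longrightarrow> (\<exists>v\<in>W. \<exists>n. (R ^^ n) w v \<and> \<phi> \<notin> lab v)) \<and>
     (\<forall>\<phi>. TH \<phi> \<in> \<Sigma> - lab w \<longrightarrow> (\<exists>v\<in>W. \<exists>n. (R ^^ n) v w \<and> \<phi> \<notin> lab v)) \<and>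
     (\<forall>\<phi> \<psi>. TU \<phi> \<psi> \<in> lab w \<longrightarrow> (\<exists>v\<in>W. \<exists>n. (R ^^ n) w v \<and> \<psi> \<in> lab v)) \<and>
     (\<forall>\<phi> \<psi>. TS \<phi> \<psi> \<in> lab w \<longrightarrow> (\<exists>v\<in>W. \<exists>n. (R ^^ n) v w \<and> \<psi> \<in> lab v)))"

definition labelled_system ::
  "fm set \<Rightarrow> 'a set \<Rightarrow> ('a \<Rightarrow> 'a \<Rightarrow> bool) \<Rightarrow> ('a \<Rightarrow> fm set) \<Rightarrow> ('a \<Rightarrow> 'a \<Rightarrow> bool) \<Rightarrow> bool" where
  "labelled_system \<Sigma> W le lab R \<longleftrightarrow>
     labelled_space \<Sigma> W le lab \<and>
     (\<forall>x y. R x y \<longrightarrow> x \<in> W \<and> y \<in> W) \<and>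
     convex_rel W le R \<and> fully_confluent W le R \<and> bi_serial W R \<and> sensible \<Sigma> W lab R"

definition quasimodel ::
  "fm set \<Rightarrow> 'a set \<Rightarrow> ('a \<Rightarrow> 'a \<Rightarrow> bool) \<Rightarrow> ('a \<Rightarrow> fm set) \<Rightarrow> ('a \<Rightarrow> 'a \<Rightarrow> bool) \<Rightarrow> bool" where
  "quasimodel \<Sigma> W le lab R \<longleftrightarrow> labelled_system \<Sigma> W le lab R \<and> omega_sensible \<Sigma> W lab R"

definition Type_inf :: "fm set set" where
  "Type_inf = {\<Phi>. is_type UNIV \<Phi> \<and> \<not> derives \<Phi> (UNIV - \<Phi>)}"

definition succ_type :: "fm set \<Rightarrow> fm set" where
  "succ_type \<Phi> = {\<phi>. TX \<phi> \<in> \<Phi>}"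

definition clab :: "fm set \<Rightarrow> fm set \<Rightarrow> fm set" where
  "clab \<Sigma> \<Phi> = \<Phi> \<inter> \<Sigma>"

text \<open>L(\<Phi>): labels of all types comparable with \<Phi> (\<Phi> \<le> \<Psi> iff \<Phi> \<supseteq> \<Psi>).\<close>
definition cL :: "fm set \<Rightarrow> fm set \<Rightarrow> fm set set" where
  "cL \<Sigma> \<Phi> = {clab \<Sigma> \<Psi> | \<Psi>. \<Psi> \<in> Type_inf \<and> (\<Psi> \<supseteq> \<Phi> \<or> \<Phi> \<supseteq> \<Psi>)}"

definition csim :: "fm set \<Rightarrow> fm set \<Rightarrow> fm set \<Rightarrow> bool" where
  "csim \<Sigma> \<Phi> \<Psi> \<longleftrightarrow> clab \<Sigma> \<Phi> = clab \<Sigma> \<Psi> \<and> cL \<Sigma> \<Phi> = cL \<Sigma> \<Psi>"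

definition cclass :: "fm set \<Rightarrow> fm set \<Rightarrow> fm set set" where
  "cclass \<Sigma> \<Phi> = {\<Psi> \<in> Type_inf. csim \<Sigma> \<Phi> \<Psi>}"

definition qW :: "fm set \<Rightarrow> fm set set set" where
  "qW \<Sigma> = cclass \<Sigma> ` Type_inf"

definition qle :: "fm set \<Rightarrow> fm set set \<Rightarrow> fm set set \<Rightarrow> bool" where
  "qle \<Sigma> A B \<longleftrightarrow> A \<in> qW \<Sigma> \<and> B \<in> qW \<Sigma> \<and>
     (\<exists>\<Phi>\<in>A. \<exists>\<Psi>\<in>B. cL \<Sigma> \<Phi> = cL \<Sigma> \<Psi> \<and> clab \<Sigma> \<Psi> \<subseteq> clab \<Sigma> \<Phi>)"

definition qlab :: "fm set \<Rightarrow> fm set set \<Rightarrow> fm set" where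
  "qlab \<Sigma> A = clab \<Sigma> (SOME \<Phi>. \<Phi> \<in> A)"

definition qR0 :: "fm set \<Rightarrow> fm set set \<Rightarrow> fm set set \<Rightarrow> bool" where
  "qR0 \<Sigma> A B \<longleftrightarrow> (\<exists>\<Phi>\<in>Type_inf. A = cclass \<Sigma> \<Phi> \<and> B = cclass \<Sigma> (succ_type \<Phi>))"

definition qRplus :: "fm set \<Rightarrow> fm set set \<Rightarrow> fm set set \<Rightarrow> bool" where
  "qRplus \<Sigma> A B \<longleftrightarrow> (\<exists>A1 A2 B1 B2.
     qle \<Sigma> A1 A \<and> qle \<Sigma> A A2 \<and> qle \<Sigma> B1 B \<and> qle \<Sigma> B B2 \<and>
     qR0 \<Sigma> A2 B1 \<and> qR0 \<Sigma> A1 B2)"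

end

theory Submission
  imports Defs
begin

text \<open>The points of \<open>\<C>/\<Sigma>\<close> are classes of prime theories of GTL. By Lindenbaum's lemma these
  interpret \<open>\<Rightarrow>\<close> and \<open>\<Leftarrow>\<close> Kripke-style along \<open>\<subseteq>\<close>, and the (co-)linearity axioms make the
  prime theories comparable with a given one a chain, which gives the labelled space. Successor
  and predecessor types are monotone and mutually inverse, which yields convexity, confluence and
  bi-seriality of \<open>R\<^sup>+\<close>; the fixed-point axioms for \<open>G, U, H, S\<close> give sensibility. For
  \<open>\<omega>\<close>-sensibility, finiteness of \<open>\<Sigma>\<close> lets a single formula express ``some class reachable
  from \<open>w\<close> lies above''; it is invariant under \<open>X\<close>, so the induction axioms for \<open>G\<close> and \<open>U\<close>
  refute every unfulfilled eventuality (dually in the past).\<close>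

section \<open>Intuitionistic reasoning inside GTL\<close>

inductive ipc_from :: "ipf set \<Rightarrow> ipf \<Rightarrow> bool" for H where
  ipc_from_hyp: "a \<in> H \<Longrightarrow> ipc_from H a"
| ipc_from_ax: "ipc a \<Longrightarrow> ipc_from H a"
| ipc_from_mp: "ipc_from H (IImp a b) \<Longrightarrow> ipc_from H a \<Longrightarrow> ipc_from H b"

lemma ipc_id: "ipc (IImp a a)"
  by (rule ipc_mp[OF ipc_mp[OF ipc_S ipc_K] ipc_K])

lemma ipc_from_deduction: "ipc_from (insert a H) b \<Longrightarrow> ipc_from H (IImp a b)"
proof (induction rule: ipc_from.induct)
  case (ipc_from_hyp c)
  then show ?case by (metis insertE ipc_from.intros ipc_K ipc_id)
next
  case (ipc_from_ax c)
  then show ?case by (meson ipc_from.intros ipc_K)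
next
  case (ipc_from_mp c d)
  then show ?case by (meson ipc_from.intros ipc_S)
qed

lemma ipc_from_empty: "ipc_from {} a \<Longrightarrow> ipc a"
  by (induction rule: ipc_from.induct) (auto intro: ipc_mp)

lemmas ipc_from_rules = ipc_from_hyp ipc_from_mp ipc_from_ax ipc.intros insertI1 insertI2

lemma ipc_imp_trans:
  "ipc (IImp (IImp (IVar 0) (IVar 1)) (IImp (IImp (IVar 1) (IVar 2)) (IImp (IVar 0) (IVar 2))))"
  by (rule ipc_from_empty, intro ipc_from_deduction) (meson ipc_from_rules)

lemma ipc_conjI:
  "ipc (IImp (IImp (IVar 2) (IVar 0))
    (IImp (IImp (IVar 2) (IVar 1)) (IImp (IVar 2) (IAnd (IVar 0) (IVar 1)))))"
proof (rule ipc_from_empty, intro ipc_from_deduction)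
  let ?H = "{IVar 2, IImp (IVar 2) (IVar 1), IImp (IVar 2) (IVar 0)}"
  have "ipc_from ?H (IVar 0)" "ipc_from ?H (IVar 1)"
    by (meson ipc_from_rules)+
  then show "ipc_from ?H (IAnd (IVar 0) (IVar 1))"
    by (meson ipc_from_ax ipc_from_mp ipc_and3)
qed

lemma ipc_curry:
  "ipc (IImp (IImp (IAnd (IVar 0) (IVar 1)) (IVar 2)) (IImp (IVar 0) (IImp (IVar 1) (IVar 2))))"
proof (rule ipc_from_empty, intro ipc_from_deduction)
  let ?H = "{IVar 1, IVar 0, IImp (IAnd (IVar 0) (IVar 1)) (IVar 2)}"
  have "ipc_from ?H (IAnd (IVar 0) (IVar 1))"
    by (meson ipc_from_rules)
  then show "ipc_from ?H (IVar 2)"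
    by (meson ipc_from_rules)
qed

lemma ipc_uncurry:
  "ipc (IImp (IImp (IVar 0) (IImp (IVar 1) (IVar 2))) (IImp (IAnd (IVar 0) (IVar 1)) (IVar 2)))"
proof (rule ipc_from_empty, intro ipc_from_deduction)
  let ?H = "{IAnd (IVar 0) (IVar 1), IImp (IVar 0) (IImp (IVar 1) (IVar 2))}"
  have "ipc_from ?H (IVar 0)" "ipc_from ?H (IVar 1)"
    by (meson ipc_from_rules)+
  then show "ipc_from ?H (IVar 2)"
    by (meson ipc_from_rules)
qed

text \<open>The basic rules below instantiate intuitionistic tautologies in \<open>IVar 0, IVar 1, IVar 2\<close>
  by the substitution \<open>nth [a, b, c]\<close>.\<close>

lemma gtl_trans [trans]: "gtl (Imp a b) \<Longrightarrow> gtl (Imp b c) \<Longrightarrow> gtl (Imp a c)"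
  using int_taut[OF ipc_imp_trans, of "nth [a, b, c]"] by simp (meson gtl.mp)

lemma gtl_conjI: "gtl (Imp c a) \<Longrightarrow> gtl (Imp c b) \<Longrightarrow> gtl (Imp c (And a b))"
  using int_taut[OF ipc_conjI, of "nth [a, b, c]"] by simp (meson gtl.mp)

lemma gtl_curry: "gtl (Imp (And a b) c) \<Longrightarrow> gtl (Imp a (Imp b c))"
  using int_taut[OF ipc_curry, of "nth [a, b, c]"] by simp (meson gtl.mp)

lemma gtl_uncurry: "gtl (Imp a (Imp b c)) \<Longrightarrow> gtl (Imp (And a b) c)"
  using int_taut[OF ipc_uncurry, of "nth [a, b, c]"] by simp (meson gtl.mp)

lemma gtl_conjE1: "gtl (Imp (And a b) a)"
  using int_taut[OF ipc_and1[of "IVar 0" "IVar 1"], of "nth [a, b]"] by simp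

lemma gtl_conjE2: "gtl (Imp (And a b) b)"
  using int_taut[OF ipc_and2[of "IVar 0" "IVar 1"], of "nth [a, b]"] by simp

lemma gtl_disjI1: "gtl (Imp a (Or a b))"
  using int_taut[OF ipc_or1[of "IVar 0" "IVar 1"], of "nth [a, b]"] by simp

lemma gtl_disjI2: "gtl (Imp b (Or a b))"
  using int_taut[OF ipc_or2[of "IVar 1" "IVar 0"], of "nth [a, b]"] by simp

lemma gtl_disjE: "gtl (Imp a c) \<Longrightarrow> gtl (Imp b c) \<Longrightarrow> gtl (Imp (Or a b) c)"
  using int_taut[OF ipc_or3[of "IVar 0" "IVar 2" "IVar 1"], of "nth [a, b, c]"] by simp (meson gtl.mp)

lemma gtl_K: "gtl (Imp a (Imp b a))"
  using int_taut[OF ipc_K[of "IVar 0" "IVar 1"], of "nth [a, b]"] by simp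

lemma gtl_bot_elim: "gtl (Imp bot a)"
  using int_taut[OF ipc_efq[of "IVar 0"], of "nth [a]"] by simp

lemma gtl_imp_refl: "gtl (Imp a a)"
  using int_taut[OF ipc_id[of "IVar 0"], of "nth [a]"] by simp

lemma gtl_top: "gtl top"
  unfolding top_def by (rule gtl_imp_refl)

lemma gtl_imp_weaken: "gtl b \<Longrightarrow> gtl (Imp a b)"
  using gtl_K gtl.mp by blast

lemma gtl_modus_ponens: "gtl (Imp (And (Imp a b) a) b)"
  by (rule gtl_uncurry, rule gtl_imp_refl)

lemma gtl_conj_mono: "gtl (Imp a a') \<Longrightarrow> gtl (Imp b b') \<Longrightarrow> gtl (Imp (And a b) (And a' b'))"
  by (meson gtl_conjE1 gtl_conjE2 gtl_conjI gtl_trans)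

lemma gtl_disj_mono: "gtl (Imp a a') \<Longrightarrow> gtl (Imp b b') \<Longrightarrow> gtl (Imp (Or a b) (Or a' b'))"
  by (meson gtl_disjI1 gtl_disjI2 gtl_disjE gtl_trans)

lemma gtl_conj_commute: "gtl (Imp (And a b) (And b a))"
  by (meson gtl_conjE1 gtl_conjE2 gtl_conjI)

lemma gtl_conj_disj_distrib: "gtl (Imp (And a (Or b c)) (Or (And a b) c))"
proof -
  have "gtl (Imp b (Imp a (Or (And a b) c)))"
    by (rule gtl_curry, rule gtl_trans[OF gtl_conj_commute gtl_disjI1])
  moreover have "gtl (Imp c (Imp a (Or (And a b) c)))"
    using gtl_trans[OF gtl_disjI2 gtl_K] .
  ultimately have "gtl (Imp (And (Or b c) a) (Or (And a b) c))"
    by (rule gtl_uncurry[OF gtl_disjE])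
  then show ?thesis
    using gtl_trans gtl_conj_commute by blast
qed

lemma gtl_iffD1: "gtl (iff a b) \<Longrightarrow> gtl (Imp a b)"
  unfolding iff_def using gtl.mp gtl_conjE1 by blast

lemma gtl_iffD2: "gtl (iff a b) \<Longrightarrow> gtl (Imp b a)"
  unfolding iff_def using gtl.mp gtl_conjE2 by blast

lemma gtl_conjs_member: "x \<in> set xs \<Longrightarrow> gtl (Imp (conjs xs) x)"
  by (induction xs) (auto intro: gtl_conjE1 gtl_trans[OF gtl_conjE2])

lemma gtl_conjs_intro: "(\<And>x. x \<in> set xs \<Longrightarrow> gtl (Imp a x)) \<Longrightarrow> gtl (Imp a (conjs xs))"
  by (induction xs) (auto intro: gtl_conjI gtl_imp_weaken gtl_top)

lemma gtl_disjs_member: "x \<in> set xs \<Longrightarrow> gtl (Imp x (disjs xs))"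
  by (induction xs) (auto intro: gtl_disjI1 gtl_trans[OF _ gtl_disjI2])

lemma gtl_disjs_elim: "(\<And>x. x \<in> set xs \<Longrightarrow> gtl (Imp x b)) \<Longrightarrow> gtl (Imp (disjs xs) b)"
  by (induction xs) (auto intro: gtl_disjE gtl_bot_elim)

lemma gtl_conjs_subset: "set xs \<subseteq> set ys \<Longrightarrow> gtl (Imp (conjs ys) (conjs xs))"
  by (meson gtl_conjs_member gtl_conjs_intro subsetD)

lemma gtl_disjs_subset: "set xs \<subseteq> set ys \<Longrightarrow> gtl (Imp (disjs xs) (disjs ys))"
  by (meson gtl_disjs_member gtl_disjs_elim subsetD)

lemma gtl_conjs_removeAll: "gtl (Imp (And t (conjs (removeAll t gs))) (conjs gs))"
  by (rule gtl_conjs_intro, rename_tac x, case_tac "x = t")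
    (auto intro: gtl_conjE1 gtl_trans[OF gtl_conjE2 gtl_conjs_member])

lemma gtl_disjs_removeAll: "gtl (Imp (disjs ds) (Or t (disjs (removeAll t ds))))"
  by (rule gtl_disjs_elim, rename_tac x, case_tac "x = t")
    (auto intro: gtl_disjI1 gtl_trans[OF gtl_disjs_member gtl_disjI2])

section \<open>Sequents and prime theories\<close>

lemma derives_mono: "derives G D \<Longrightarrow> G \<subseteq> G' \<Longrightarrow> D \<subseteq> D' \<Longrightarrow> derives G' D'"
  unfolding derives_def by blast

lemma derives_refl: "t \<in> G \<Longrightarrow> t \<in> D \<Longrightarrow> derives G D"
  unfolding derives_def using gtl_trans[OF gtl_conjE1 gtl_disjI1]
  by (intro exI[of _ "[t]"]) auto

lemma derives_cut:
  assumes "derives (insert t G) D" and "derives G (insert t D)"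
  shows "derives G D"
proof -
  obtain gs1 ds1 where 1: "set gs1 \<subseteq> insert t G" "set ds1 \<subseteq> D" "gtl (Imp (conjs gs1) (disjs ds1))"
    using assms(1) unfolding derives_def by blast
  obtain gs2 ds2 where 2: "set gs2 \<subseteq> G" "set ds2 \<subseteq> insert t D" "gtl (Imp (conjs gs2) (disjs ds2))"
    using assms(2) unfolding derives_def by blast
  define gs where "gs = removeAll t gs1"
  define ds where "ds = removeAll t ds2"
  have "gtl (Imp (conjs (gs @ gs2)) (And (conjs gs) (conjs gs2)))"
    by (rule gtl_conjI; rule gtl_conjs_subset; auto)
  also have "gtl (Imp (And (conjs gs) (conjs gs2)) (And (conjs gs) (Or t (disjs ds))))"
    unfolding ds_def by (rule gtl_conj_mono[OF gtl_imp_refl gtl_trans[OF 2(3) gtl_disjs_removeAll]])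
  also have "gtl (Imp (And (conjs gs) (Or t (disjs ds))) (Or (And (conjs gs) t) (disjs ds)))"
    by (rule gtl_conj_disj_distrib)
  also have "gtl (Imp (Or (And (conjs gs) t) (disjs ds)) (disjs (ds1 @ ds)))"
  proof (rule gtl_disjE)
    have "gtl (Imp (And (conjs gs) t) (disjs ds1))"
      unfolding gs_def using gtl_trans[OF gtl_conj_commute gtl_trans[OF gtl_conjs_removeAll 1(3)]] .
    then show "gtl (Imp (And (conjs gs) t) (disjs (ds1 @ ds)))"
      by (rule gtl_trans[OF _ gtl_disjs_subset]) simp
  qed (auto intro: gtl_disjs_subset)
  finally have "gtl (Imp (conjs (gs @ gs2)) (disjs (ds1 @ ds)))" .
  moreover have "set (gs @ gs2) \<subseteq> G" "set (ds1 @ ds) \<subseteq> D"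
    using 1 2 by (auto simp: gs_def ds_def)
  ultimately show ?thesis
    unfolding derives_def by blast
qed


text \<open>The single condition that \<open>\<Phi> \<turnstile> \<L> - \<Phi>\<close> fails makes \<open>\<Phi>\<close> deductively closed,
  consistent and prime.\<close>

definition prime_theory :: "fm set \<Rightarrow> bool" where
  "prime_theory \<Phi> \<longleftrightarrow> \<not> derives \<Phi> (UNIV - \<Phi>)"

lemma prime_theory_disjs_member:
  "prime_theory \<Phi> \<Longrightarrow> set gs \<subseteq> \<Phi> \<Longrightarrow> gtl (Imp (conjs gs) (disjs ds)) \<Longrightarrow> \<exists>d\<in>set ds. d \<in> \<Phi>"
  unfolding prime_theory_def derives_def by blast

lemma prime_theory_closed:
  "prime_theory \<Phi> \<Longrightarrow> set gs \<subseteq> \<Phi> \<Longrightarrow> gtl (Imp (conjs gs) b) \<Longrightarrow> b \<in> \<Phi>"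
  using prime_theory_disjs_member[of \<Phi> gs "[b]"] gtl_trans[OF _ gtl_disjs_member[of b "[b]"]] by auto

lemma prime_theory_imp_closed: "prime_theory \<Phi> \<Longrightarrow> a \<in> \<Phi> \<Longrightarrow> gtl (Imp a b) \<Longrightarrow> b \<in> \<Phi>"
  using prime_theory_closed[of \<Phi> "[a]" b] gtl_trans[OF gtl_conjE1] by auto

lemma prime_theory_imp2_closed:
  "prime_theory \<Phi> \<Longrightarrow> a \<in> \<Phi> \<Longrightarrow> b \<in> \<Phi> \<Longrightarrow> gtl (Imp (And a b) c) \<Longrightarrow> c \<in> \<Phi>"
  using prime_theory_closed[of \<Phi> "[a, b]" c] gtl_trans[OF gtl_conj_mono[OF gtl_imp_refl gtl_conjE1]]
  by auto

lemma prime_theory_gtl: "prime_theory \<Phi> \<Longrightarrow> gtl b \<Longrightarrow> b \<in> \<Phi>"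
  using prime_theory_closed[of \<Phi> "[]" b] gtl_imp_weaken by auto

lemma prime_theory_bot: "prime_theory \<Phi> \<Longrightarrow> bot \<notin> \<Phi>"
  using prime_theory_disjs_member[of \<Phi> "[bot]" "[]"] gtl_conjE1 by auto

lemma prime_theory_top: "prime_theory \<Phi> \<Longrightarrow> top \<in> \<Phi>"
  using prime_theory_gtl gtl_top by blast

lemma prime_theory_disjs_iff:
  assumes "prime_theory \<Phi>"
  shows "disjs ds \<in> \<Phi> \<longleftrightarrow> (\<exists>d\<in>set ds. d \<in> \<Phi>)"
proof
  assume "disjs ds \<in> \<Phi>"
  then show "\<exists>d\<in>set ds. d \<in> \<Phi>"
    using prime_theory_disjs_member[OF assms, of "[disjs ds]" ds] gtl_conjE1 by simp
qed (use prime_theory_imp_closed[OF assms] gtl_disjs_member in blast)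

lemma prime_theory_Or_iff:
  assumes "prime_theory \<Phi>"
  shows "Or a b \<in> \<Phi> \<longleftrightarrow> a \<in> \<Phi> \<or> b \<in> \<Phi>"
proof
  assume "Or a b \<in> \<Phi>"
  then have "disjs [a, b] \<in> \<Phi>"
    using prime_theory_imp_closed[OF assms _ gtl_disj_mono[OF gtl_imp_refl gtl_disjI1]] by simp
  then show "a \<in> \<Phi> \<or> b \<in> \<Phi>"
    using prime_theory_disjs_iff[OF assms, of "[a, b]"] by simp
qed (use prime_theory_imp_closed[OF assms] gtl_disjI1 gtl_disjI2 in blast)

lemma prime_theory_And_iff: "prime_theory \<Phi> \<Longrightarrow> And a b \<in> \<Phi> \<longleftrightarrow> a \<in> \<Phi> \<and> b \<in> \<Phi>"
  using prime_theory_imp_closed prime_theory_imp2_closed gtl_conjE1 gtl_conjE2 gtl_imp_refl by blast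

lemma prime_theory_conjs_iff: "prime_theory \<Phi> \<Longrightarrow> conjs xs \<in> \<Phi> \<longleftrightarrow> set xs \<subseteq> \<Phi>"
  by (induction xs) (auto simp: prime_theory_And_iff prime_theory_top)

lemma prime_theory_ImpD: "prime_theory \<Phi> \<Longrightarrow> Imp a b \<in> \<Phi> \<Longrightarrow> a \<in> \<Phi> \<Longrightarrow> b \<in> \<Phi>"
  using prime_theory_imp2_closed gtl_modus_ponens by blast

lemma prime_theory_ImpI: "prime_theory \<Phi> \<Longrightarrow> b \<in> \<Phi> \<Longrightarrow> Imp a b \<in> \<Phi>"
  using prime_theory_imp_closed gtl_K by blast

lemma prime_theory_CoimpD: "prime_theory \<Phi> \<Longrightarrow> Coimp a b \<in> \<Phi> \<Longrightarrow> a \<in> \<Phi>"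
  using prime_theory_imp_closed rule_coimp_res[OF gtl_disjI2] by blast

lemma prime_theory_CoimpI: "prime_theory \<Phi> \<Longrightarrow> a \<in> \<Phi> \<Longrightarrow> b \<notin> \<Phi> \<Longrightarrow> Coimp a b \<in> \<Phi>"
  using prime_theory_imp_closed[OF _ _ ax_coimp] prime_theory_Or_iff by blast

lemma Type_inf_eq: "Type_inf = Collect prime_theory"
proof -
  have "is_type UNIV \<Phi>" if "prime_theory \<Phi>" for \<Phi>
    unfolding is_type_def using that
    by (simp add: prime_theory_And_iff prime_theory_Or_iff)
      (meson prime_theory_ImpD prime_theory_ImpI prime_theory_CoimpD prime_theory_CoimpI)
  then show ?thesis
    unfolding Type_inf_def prime_theory_def by blast
qed

lemma derives_cut_finite:
  assumes "finite T" and "\<And>t. t \<in> T \<Longrightarrow> derives (insert t G) D" and "derives G (D \<union> T)"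
  shows "derives G D"
  using assms
proof (induction T rule: finite_induct)
  case (insert t T)
  have "derives G (insert t (D \<union> T))"
    using insert.prems(2) by simp
  moreover have "derives (insert t G) (D \<union> T)"
    by (rule derives_mono[OF insert.prems(1)]) auto
  ultimately have "derives G (D \<union> T)"
    by (rule derives_cut[rotated])
  with insert.prems(1) show ?case
    by (intro insert.IH) auto
qed simp

lemma not_derives_Union_chain:
  assumes "C \<noteq> {}" "subset.chain A C" "\<And>Z. Z \<in> C \<Longrightarrow> \<not> derives Z \<Delta>"
  shows "\<not> derives (\<Union>C) \<Delta>"
proof
  assume "derives (\<Union>C) \<Delta>"
  then obtain gs ds where gd: "set gs \<subseteq> \<Union>C" "set ds \<subseteq> \<Delta>" "gtl (Imp (conjs gs) (disjs ds))"
    unfolding derives_def by blast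
  obtain Z where "Z \<in> C" "set gs \<subseteq> Z"
    using finite_subset_Union_chain[OF finite_set gd(1) assms(1,2)] by blast
  then show False
    using assms(3) gd(2,3) unfolding derives_def by blast
qed

lemma lindenbaum:
  assumes "\<not> derives \<Gamma> \<Delta>"
  obtains \<Phi> where "prime_theory \<Phi>" "\<Gamma> \<subseteq> \<Phi>" "\<Delta> \<inter> \<Phi> = {}"
proof -
  define A where "A = {\<Gamma>'. \<Gamma> \<subseteq> \<Gamma>' \<and> \<not> derives \<Gamma>' \<Delta>}"
  have "\<exists>M\<in>A. \<forall>X\<in>A. M \<subseteq> X \<longrightarrow> X = M"
  proof (rule subset_Zorn_nonempty)
    show "A \<noteq> {}"
      using assms unfolding A_def by blast
    fix C assume "C \<noteq> {}" "subset.chain A C"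
    then show "\<Union>C \<in> A"
      using not_derives_Union_chain[of C A \<Delta>] unfolding A_def subset.chain_def by blast
  qed
  then obtain M where "M \<in> A" and maximal: "\<And>X. X \<in> A \<Longrightarrow> M \<subseteq> X \<Longrightarrow> X = M"
    by blast
  then have M: "\<Gamma> \<subseteq> M" "\<not> derives M \<Delta>"
    unfolding A_def by blast+
  have "prime_theory M"
    unfolding prime_theory_def
  proof
    assume "derives M (UNIV - M)"
    then obtain ds where ds: "set ds \<subseteq> UNIV - M" "derives M (set ds)"
      unfolding derives_def by blast
    have "derives (insert t M) \<Delta>" if "t \<in> set ds" for t
    proof (rule ccontr)
      assume "\<not> derives (insert t M) \<Delta>"
      then have "insert t M = M"
        using M(1) by (intro maximal) (auto simp: A_def)
      then show False
        using ds(1) that by blast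
    qed
    moreover have "derives M (\<Delta> \<union> set ds)"
      using ds(2) derives_mono by blast
    ultimately have "derives M \<Delta>"
      by (rule derives_cut_finite[OF finite_set])
    then show False
      using M(2) by blast
  qed
  moreover have "\<Delta> \<inter> M = {}"
    using M(2) derives_refl by blast
  ultimately show ?thesis
    using that M(1) by blast
qed

lemma gtl_Imp_if_prime_theories:
  assumes "\<And>\<Phi>. prime_theory \<Phi> \<Longrightarrow> a \<in> \<Phi> \<Longrightarrow> b \<in> \<Phi>"
  shows "gtl (Imp a b)"
proof (rule ccontr)
  assume "\<not> gtl (Imp a b)"
  moreover have "gtl (Imp a b)" if "derives {a} {b}"
  proof -
    obtain gs ds where "set gs \<subseteq> {a}" "set ds \<subseteq> {b}" "gtl (Imp (conjs gs) (disjs ds))"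
      using \<open>derives {a} {b}\<close> unfolding derives_def by blast
    then show ?thesis
      using gtl_trans[OF gtl_trans[OF gtl_conjs_intro[of gs a]] gtl_disjs_elim[of ds b]] gtl_imp_refl
      by blast
  qed
  ultimately have "\<not> derives {a} {b}"
    by blast
  then obtain \<Phi> where "prime_theory \<Phi>" "a \<in> \<Phi>" "b \<notin> \<Phi>"
    using lindenbaum by blast
  then show False
    using assms by blast
qed

lemma prime_theory_Imp_iff:
  assumes "prime_theory \<Phi>"
  shows "Imp a b \<in> \<Phi> \<longleftrightarrow> (\<forall>\<Psi>. prime_theory \<Psi> \<longrightarrow> \<Phi> \<subseteq> \<Psi> \<longrightarrow> a \<in> \<Psi> \<longrightarrow> b \<in> \<Psi>)"
proof
  assume "Imp a b \<in> \<Phi>"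
  then show "\<forall>\<Psi>. prime_theory \<Psi> \<longrightarrow> \<Phi> \<subseteq> \<Psi> \<longrightarrow> a \<in> \<Psi> \<longrightarrow> b \<in> \<Psi>"
    using prime_theory_ImpD by blast
next
  assume upward: "\<forall>\<Psi>. prime_theory \<Psi> \<longrightarrow> \<Phi> \<subseteq> \<Psi> \<longrightarrow> a \<in> \<Psi> \<longrightarrow> b \<in> \<Psi>"
  have "derives (insert a \<Phi>) {b}"
  proof (rule ccontr)
    assume "\<not> derives (insert a \<Phi>) {b}"
    then obtain \<Psi> where "prime_theory \<Psi>" "insert a \<Phi> \<subseteq> \<Psi>" "{b} \<inter> \<Psi> = {}"
      by (rule lindenbaum)
    then show False
      using upward by blast
  qed
  then obtain gs ds where gd: "set gs \<subseteq> insert a \<Phi>" "set ds \<subseteq> {b}" "gtl (Imp (conjs gs) (disjs ds))"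
    unfolding derives_def by blast
  have "gtl (Imp (disjs ds) b)"
    using gd(2) by (intro gtl_disjs_elim) (auto intro: gtl_imp_refl)
  then have "gtl (Imp (And (conjs (removeAll a gs)) a) b)"
    using gtl_trans[OF gtl_conj_commute gtl_trans[OF gtl_conjs_removeAll gtl_trans[OF gd(3)]]] by blast
  then have "gtl (Imp (conjs (removeAll a gs)) (Imp a b))"
    by (rule gtl_curry)
  moreover have "set (removeAll a gs) \<subseteq> \<Phi>"
    using gd(1) by auto
  ultimately show "Imp a b \<in> \<Phi>"
    using prime_theory_closed[OF assms] by blast
qed

lemma prime_theory_Coimp_iff:
  assumes "prime_theory \<Phi>"
  shows "Coimp a b \<in> \<Phi> \<longleftrightarrow> (\<exists>\<Psi>. prime_theory \<Psi> \<and> \<Psi> \<subseteq> \<Phi> \<and> a \<in> \<Psi> \<and> b \<notin> \<Psi>)"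
proof
  assume coimp: "Coimp a b \<in> \<Phi>"
  have "\<not> derives {a} (insert b (UNIV - \<Phi>))"
  proof
    assume "derives {a} (insert b (UNIV - \<Phi>))"
    then obtain gs ds where gd: "set gs \<subseteq> {a}" "set ds \<subseteq> insert b (UNIV - \<Phi>)"
      "gtl (Imp (conjs gs) (disjs ds))" unfolding derives_def by blast
    have "gtl (Imp a (conjs gs))"
      using gd(1) by (intro gtl_conjs_intro) (auto intro: gtl_imp_refl)
    then have "gtl (Imp a (Or b (disjs (removeAll b ds))))"
      using gtl_trans[OF _ gtl_trans[OF gd(3) gtl_disjs_removeAll]] by blast
    then have "disjs (removeAll b ds) \<in> \<Phi>"
      using prime_theory_imp_closed[OF assms coimp rule_coimp_res] by blast
    then show False
      using gd(2) prime_theory_disjs_iff[OF assms] by auto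
  qed
  then show "\<exists>\<Psi>. prime_theory \<Psi> \<and> \<Psi> \<subseteq> \<Phi> \<and> a \<in> \<Psi> \<and> b \<notin> \<Psi>"
    by (rule lindenbaum) blast
next
  assume "\<exists>\<Psi>. prime_theory \<Psi> \<and> \<Psi> \<subseteq> \<Phi> \<and> a \<in> \<Psi> \<and> b \<notin> \<Psi>"
  then show "Coimp a b \<in> \<Phi>"
    using prime_theory_CoimpI by blast
qed

lemma prime_theory_neg_iff:
  assumes "prime_theory \<Phi>" and "\<And>\<Psi>. prime_theory \<Psi> \<Longrightarrow> \<Phi> \<subseteq> \<Psi> \<Longrightarrow> x \<in> \<Psi> \<Longrightarrow> x \<in> \<Phi>"
  shows "neg x \<in> \<Phi> \<longleftrightarrow> x \<notin> \<Phi>"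
  unfolding neg_def prime_theory_Imp_iff[OF assms(1)] using assms prime_theory_bot by blast

text \<open>Linearity and co-linearity of GTL make the prime theories around a given one a chain.\<close>

lemma prime_theory_linear_above:
  assumes "prime_theory \<Psi>" "prime_theory A" "prime_theory B" "\<Psi> \<subseteq> A" "\<Psi> \<subseteq> B"
  shows "comparable (\<subseteq>) A B"
proof (rule ccontr)
  assume "\<not> comparable (\<subseteq>) A B"
  then obtain x y where xy: "x \<in> A" "x \<notin> B" "y \<in> B" "y \<notin> A"
    unfolding comparable_def by blast
  have "Imp x y \<in> \<Psi> \<or> Imp y x \<in> \<Psi>"
    using prime_theory_gtl[OF assms(1) ax_lin] prime_theory_Or_iff[OF assms(1)] by blast
  then show False
    using xy assms prime_theory_ImpD by blast
qed

lemma prime_theory_linear_below: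
  assumes "prime_theory \<Psi>" "prime_theory A" "prime_theory B" "A \<subseteq> \<Psi>" "B \<subseteq> \<Psi>"
  shows "comparable (\<subseteq>) A B"
proof (rule ccontr)
  assume "\<not> comparable (\<subseteq>) A B"
  then obtain x y where xy: "x \<in> A" "x \<notin> B" "y \<in> B" "y \<notin> A"
    unfolding comparable_def by blast
  then have "Coimp x y \<in> \<Psi>" "Coimp y x \<in> \<Psi>"
    using prime_theory_CoimpI[OF assms(2)] prime_theory_CoimpI[OF assms(3)] assms(4,5) by blast+
  then have "And (Coimp x y) (Coimp y x) \<in> \<Psi>"
    using prime_theory_And_iff[OF assms(1)] by blast
  then have "bot \<in> \<Psi>"
    using prime_theory_gtl[OF assms(1) ax_coimp_neg] prime_theory_ImpD[OF assms(1)]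
    unfolding neg_def by blast
  then show False
    using prime_theory_bot[OF assms(1)] by blast
qed

lemma prime_theory_comparable_trans:
  assumes "prime_theory A" "prime_theory B" "prime_theory C"
    and "comparable (\<subseteq>) A B" "comparable (\<subseteq>) B C"
  shows "comparable (\<subseteq>) A C"
  using assms prime_theory_linear_above[of B A C] prime_theory_linear_below[of B A C]
  unfolding comparable_def by blast


section \<open>Successor and predecessor types\<close>

definition pred_type :: "fm set \<Rightarrow> fm set" where
  "pred_type \<Phi> = {\<phi>. TY \<phi> \<in> \<Phi>}"

text \<open>The future and the past halves of GTL are mirror images of each other; this locale
  captures one half, with \<open>N\<close>, \<open>B\<close>, \<open>U\<close> standing for \<open>X\<close>, \<open>G\<close>, \<open>U\<close> or for \<open>Y\<close>, \<open>H\<close>, \<open>S\<close>.\<close>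

locale temporal_direction =
  fixes step :: "fm set \<Rightarrow> fm set" and N B :: "fm \<Rightarrow> fm" and U :: "fm \<Rightarrow> fm \<Rightarrow> fm"
  assumes step_eq: "step \<Phi> = {\<phi>. N \<phi> \<in> \<Phi>}"
    and N_bot: "gtl (neg (N bot))"
    and N_Or: "gtl (Imp (N (Or \<phi> \<psi>)) (Or (N \<phi>) (N \<psi>)))"
    and N_And: "gtl (Imp (And (N \<phi>) (N \<psi>)) (N (And \<phi> \<psi>)))"
    and N_Imp: "gtl (iff (N (Imp \<phi> \<psi>)) (Imp (N \<phi>) (N \<psi>)))"
    and N_nec: "gtl \<phi> \<Longrightarrow> gtl (N \<phi>)"
    and B_K: "gtl (Imp (B (Imp \<phi> \<psi>)) (Imp (B \<phi>) (B \<psi>)))"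
    and B_U_mono: "gtl (Imp (B (Imp \<phi> \<psi>)) (Imp (U \<theta> \<phi>) (U \<theta> \<psi>)))"
    and B_fix: "gtl (Imp (B \<phi>) (And \<phi> (N (B \<phi>))))"
    and U_fix: "gtl (Imp (Or \<psi> (And \<phi> (N (U \<phi> \<psi>)))) (U \<phi> \<psi>))"
    and B_induct: "gtl (Imp (B (Imp \<phi> (N \<phi>))) (Imp \<phi> (B \<phi>)))"
    and U_induct: "gtl (Imp (B (Imp (And \<psi> (N \<phi>)) \<phi>)) (Imp (U \<psi> \<phi>) \<phi>))"
    and B_nec: "gtl \<phi> \<Longrightarrow> gtl (B \<phi>)"
begin

lemma step_mono: "\<Phi> \<subseteq> \<Psi> \<Longrightarrow> step \<Phi> \<subseteq> step \<Psi>"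
  unfolding step_eq by blast

lemma N_mono: "gtl (Imp a b) \<Longrightarrow> gtl (Imp (N a) (N b))"
  using gtl.mp[OF gtl_iffD1[OF N_Imp] N_nec] by blast

lemma N_conjs: "gtl (Imp (conjs (map N gs)) (N (conjs gs)))"
proof (induction gs)
  case Nil
  show ?case
    using gtl_imp_weaken[OF N_nec[OF gtl_top]] by simp
next
  case (Cons g gs)
  then show ?case
    using gtl_trans[OF gtl_conj_mono[OF gtl_imp_refl Cons] N_And] by simp
qed

lemma N_disjs: "gtl (Imp (N (disjs ds)) (disjs (map N ds)))"
proof (induction ds)
  case Nil
  show ?case
    using N_bot by (simp add: neg_def)
next
  case (Cons d ds)
  then show ?case
    using gtl_trans[OF N_Or gtl_disj_mono[OF gtl_imp_refl Cons]] by simp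
qed

lemma prime_theory_step: "prime_theory \<Phi> \<Longrightarrow> prime_theory (step \<Phi>)"
  unfolding prime_theory_def[of "step \<Phi>"]
proof
  assume "prime_theory \<Phi>" and "derives (step \<Phi>) (UNIV - step \<Phi>)"
  then obtain gs ds where gd: "set gs \<subseteq> step \<Phi>" "set ds \<subseteq> UNIV - step \<Phi>"
    "gtl (Imp (conjs gs) (disjs ds))" unfolding derives_def by blast
  have "gtl (Imp (conjs (map N gs)) (disjs (map N ds)))"
    using gtl_trans[OF N_conjs gtl_trans[OF N_mono[OF gd(3)] N_disjs]] .
  moreover have "set (map N gs) \<subseteq> \<Phi>"
    using gd(1) by (auto simp: step_eq)
  ultimately obtain d where "d \<in> set (map N ds)" "d \<in> \<Phi>"
    using prime_theory_disjs_member[OF \<open>prime_theory \<Phi>\<close>] by blast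
  then show False
    using gd(2) by (auto simp: step_eq)
qed

lemma B_mono: "gtl (Imp a b) \<Longrightarrow> gtl (Imp (B a) (B b))"
  using gtl.mp[OF B_K B_nec] by blast

lemma B_induct_rule: "gtl (Imp c (N c)) \<Longrightarrow> gtl (Imp c (B c))"
  using gtl.mp[OF B_induct B_nec] by blast

lemma U_mono_right: "gtl (Imp b c) \<Longrightarrow> gtl (Imp (U a b) (U a c))"
  using gtl.mp[OF B_U_mono B_nec] by blast

lemma U_induct_rule: "gtl (Imp (And a (N c)) c) \<Longrightarrow> gtl (Imp (U a c) c)"
  using gtl.mp[OF U_induct B_nec] by blast

lemma B_unfold: "gtl (Imp (And a (N (B a))) (B a))"
proof -
  let ?c = "And a (N (B a))"
  have "gtl (Imp ?c (N ?c))"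
    using gtl_trans[OF gtl_conjE2 N_mono[OF B_fix]] .
  then have "gtl (Imp ?c (B ?c))"
    by (rule B_induct_rule)
  then show ?thesis
    using gtl_trans[OF _ B_mono[OF gtl_conjE1]] by blast
qed

lemma U_unfold: "gtl (Imp (U a b) (Or b (And a (N (U a b)))))"
proof -
  let ?t = "Or b (And a (N (U a b)))"
  have "gtl (Imp (And a (N ?t)) ?t)"
    using gtl_trans[OF gtl_conj_mono[OF gtl_imp_refl N_mono[OF U_fix]] gtl_disjI2] .
  then have "gtl (Imp (U a ?t) ?t)"
    by (rule U_induct_rule)
  then show ?thesis
    using gtl_trans[OF U_mono_right[OF gtl_disjI1]] by blast
qed

lemma prime_theory_B_iff:
  "prime_theory \<Phi> \<Longrightarrow> B \<phi> \<in> \<Phi> \<longleftrightarrow> \<phi> \<in> \<Phi> \<and> N (B \<phi>) \<in> \<Phi>"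
  using prime_theory_imp_closed[OF _ _ B_fix] prime_theory_imp2_closed[OF _ _ _ B_unfold]
    prime_theory_And_iff by blast

lemma prime_theory_U_iff:
  "prime_theory \<Phi> \<Longrightarrow> U \<phi> \<psi> \<in> \<Phi> \<longleftrightarrow> \<psi> \<in> \<Phi> \<or> (\<phi> \<in> \<Phi> \<and> N (U \<phi> \<psi>) \<in> \<Phi>)"
  using prime_theory_imp_closed[OF _ _ U_unfold] prime_theory_imp_closed[OF _ _ U_fix]
    prime_theory_Or_iff prime_theory_And_iff by blast

end

interpretation future: temporal_direction succ_type TX TG TU
  by unfold_locales (auto simp: succ_type_def intro: ax_X_bot ax_X_or ax_X_and ax_X_imp nec_X
      ax_G_K ax_G_U2 ax_G_fix ax_U_fix ax_G_ind ax_U_ind nec_G)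

interpretation past: temporal_direction pred_type TY TH TS
  by unfold_locales (auto simp: pred_type_def intro: ax_Y_bot ax_Y_or ax_Y_and ax_Y_imp nec_Y
      ax_H_K ax_H_S2 ax_H_fix ax_S_fix ax_H_ind ax_S_ind nec_H)

lemma succ_pred_type: "prime_theory \<Phi> \<Longrightarrow> succ_type (pred_type \<Phi>) = \<Phi>"
  unfolding succ_type_def pred_type_def
  using prime_theory_imp_closed gtl_iffD1[OF ax_YX] gtl_iffD2[OF ax_YX] by blast

lemma pred_succ_type: "prime_theory \<Phi> \<Longrightarrow> pred_type (succ_type \<Phi>) = \<Phi>"
  unfolding succ_type_def pred_type_def
  using prime_theory_imp_closed gtl_iffD1[OF ax_XY] gtl_iffD2[OF ax_XY] by blast

lemma succ_type_subset_iff: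
  "prime_theory \<Phi> \<Longrightarrow> prime_theory \<Psi> \<Longrightarrow> succ_type \<Phi> \<subseteq> \<Psi> \<longleftrightarrow> \<Phi> \<subseteq> pred_type \<Psi>"
  using past.step_mono future.step_mono pred_succ_type succ_pred_type by metis

lemma subset_succ_type_iff:
  "prime_theory \<Phi> \<Longrightarrow> prime_theory \<Psi> \<Longrightarrow> \<Psi> \<subseteq> succ_type \<Phi> \<longleftrightarrow> pred_type \<Psi> \<subseteq> \<Phi>"
  using past.step_mono future.step_mono pred_succ_type succ_pred_type by metis

section \<open>The quotient \<open>\<C>/\<Sigma>\<close> as a labelled space\<close>

lemma subformula_closedD:
  assumes "subformula_closed \<Sigma>"
  shows "And a b \<in> \<Sigma> \<Longrightarrow> a \<in> \<Sigma> \<and> b \<in> \<Sigma>" "Or a b \<in> \<Sigma> \<Longrightarrow> a \<in> \<Sigma> \<and> b \<in> \<Sigma>"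
    "Imp a b \<in> \<Sigma> \<Longrightarrow> a \<in> \<Sigma> \<and> b \<in> \<Sigma>" "Coimp a b \<in> \<Sigma> \<Longrightarrow> a \<in> \<Sigma> \<and> b \<in> \<Sigma>"
    "TU a b \<in> \<Sigma> \<Longrightarrow> a \<in> \<Sigma> \<and> b \<in> \<Sigma>" "TS a b \<in> \<Sigma> \<Longrightarrow> a \<in> \<Sigma> \<and> b \<in> \<Sigma>"
    "TX a \<in> \<Sigma> \<Longrightarrow> a \<in> \<Sigma>" "TY a \<in> \<Sigma> \<Longrightarrow> a \<in> \<Sigma>"
    "TG a \<in> \<Sigma> \<Longrightarrow> a \<in> \<Sigma>" "TH a \<in> \<Sigma> \<Longrightarrow> a \<in> \<Sigma>"
proof -
  have "a \<in> subfs a" for a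
    by (cases a) auto
  then show "And a b \<in> \<Sigma> \<Longrightarrow> a \<in> \<Sigma> \<and> b \<in> \<Sigma>" "Or a b \<in> \<Sigma> \<Longrightarrow> a \<in> \<Sigma> \<and> b \<in> \<Sigma>"
    "Imp a b \<in> \<Sigma> \<Longrightarrow> a \<in> \<Sigma> \<and> b \<in> \<Sigma>" "Coimp a b \<in> \<Sigma> \<Longrightarrow> a \<in> \<Sigma> \<and> b \<in> \<Sigma>"
    "TU a b \<in> \<Sigma> \<Longrightarrow> a \<in> \<Sigma> \<and> b \<in> \<Sigma>" "TS a b \<in> \<Sigma> \<Longrightarrow> a \<in> \<Sigma> \<and> b \<in> \<Sigma>"
    "TX a \<in> \<Sigma> \<Longrightarrow> a \<in> \<Sigma>" "TY a \<in> \<Sigma> \<Longrightarrow> a \<in> \<Sigma>"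
    "TG a \<in> \<Sigma> \<Longrightarrow> a \<in> \<Sigma>" "TH a \<in> \<Sigma> \<Longrightarrow> a \<in> \<Sigma>"
    using assms unfolding subformula_closed_def by fastforce+
qed

lemma cL_altdef: "cL \<Sigma> \<Phi> = {clab \<Sigma> \<Psi> | \<Psi>. prime_theory \<Psi> \<and> comparable (\<subseteq>) \<Phi> \<Psi>}"
  unfolding cL_def Type_inf_eq comparable_def by blast

lemma cL_subset_Pow: "cL \<Sigma> \<Phi> \<subseteq> Pow \<Sigma>"
  unfolding cL_def clab_def by blast

lemma clab_in_cL: "prime_theory \<Phi> \<Longrightarrow> clab \<Sigma> \<Phi> \<in> cL \<Sigma> \<Phi>"
  unfolding cL_altdef comparable_def by blast

lemma cL_eq_if_comparable:
  assumes "prime_theory \<Phi>" "prime_theory \<Psi>" "comparable (\<subseteq>) \<Phi> \<Psi>"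
  shows "cL \<Sigma> \<Phi> = cL \<Sigma> \<Psi>"
proof -
  have "comparable (\<subseteq>) \<Phi> \<Theta> \<longleftrightarrow> comparable (\<subseteq>) \<Psi> \<Theta>" if "prime_theory \<Theta>" for \<Theta>
    using prime_theory_comparable_trans[of \<Psi> \<Phi> \<Theta>] prime_theory_comparable_trans[of \<Phi> \<Psi> \<Theta>]
      assms that unfolding comparable_def by blast
  then show ?thesis
    unfolding cL_altdef by blast
qed

lemma cL_linear:
  assumes "prime_theory \<Phi>" "a \<in> cL \<Sigma> \<Phi>" "b \<in> cL \<Sigma> \<Phi>"
  shows "a \<subseteq> b \<or> b \<subseteq> a"
proof -
  obtain A B where "prime_theory A" "comparable (\<subseteq>) \<Phi> A" "a = clab \<Sigma> A"
    "prime_theory B" "comparable (\<subseteq>) \<Phi> B" "b = clab \<Sigma> B"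
    using assms(2,3) unfolding cL_altdef by blast
  moreover from this have "comparable (\<subseteq>) A B"
    using prime_theory_comparable_trans[OF _ assms(1)] comparable_def by metis
  ultimately show ?thesis
    unfolding comparable_def clab_def by blast
qed

lemma cclass_self: "prime_theory \<Phi> \<Longrightarrow> \<Phi> \<in> cclass \<Sigma> \<Phi>"
  unfolding cclass_def csim_def Type_inf_eq by simp

lemma mem_cclassD:
  "\<Psi> \<in> cclass \<Sigma> \<Phi> \<Longrightarrow> prime_theory \<Psi> \<and> clab \<Sigma> \<Psi> = clab \<Sigma> \<Phi> \<and> cL \<Sigma> \<Psi> = cL \<Sigma> \<Phi>"
  unfolding cclass_def csim_def Type_inf_eq by auto

lemma cclass_eq_iff:
  assumes "prime_theory \<Phi>" "prime_theory \<Psi>"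
  shows "cclass \<Sigma> \<Phi> = cclass \<Sigma> \<Psi> \<longleftrightarrow> clab \<Sigma> \<Phi> = clab \<Sigma> \<Psi> \<and> cL \<Sigma> \<Phi> = cL \<Sigma> \<Psi>"
proof
  assume "cclass \<Sigma> \<Phi> = cclass \<Sigma> \<Psi>"
  then have "\<Psi> \<in> cclass \<Sigma> \<Phi>"
    using cclass_self[OF assms(2)] by simp
  then show "clab \<Sigma> \<Phi> = clab \<Sigma> \<Psi> \<and> cL \<Sigma> \<Phi> = cL \<Sigma> \<Psi>"
    using mem_cclassD by simp
qed (auto simp: cclass_def csim_def)

lemma qW_iff: "A \<in> qW \<Sigma> \<longleftrightarrow> (\<exists>\<Phi>. prime_theory \<Phi> \<and> A = cclass \<Sigma> \<Phi>)"
  unfolding qW_def Type_inf_eq by blast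

lemma qWE:
  assumes "A \<in> qW \<Sigma>"
  obtains \<Phi> where "prime_theory \<Phi>" "A = cclass \<Sigma> \<Phi>"
  using assms qW_iff by blast

lemma cclass_in_qW: "prime_theory \<Phi> \<Longrightarrow> cclass \<Sigma> \<Phi> \<in> qW \<Sigma>"
  using qW_iff by blast

lemma qlab_cclass: "prime_theory \<Phi> \<Longrightarrow> qlab \<Sigma> (cclass \<Sigma> \<Phi>) = clab \<Sigma> \<Phi>"
  unfolding qlab_def using someI[of "\<lambda>\<Psi>. \<Psi> \<in> cclass \<Sigma> \<Phi>", OF cclass_self] mem_cclassD by blast

lemma mem_qlab_cclass_iff: "prime_theory \<Phi> \<Longrightarrow> x \<in> \<Sigma> \<Longrightarrow> x \<in> qlab \<Sigma> (cclass \<Sigma> \<Phi>) \<longleftrightarrow> x \<in> \<Phi>"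
  using qlab_cclass unfolding clab_def by blast

lemma qle_in_qW: "qle \<Sigma> A B \<Longrightarrow> A \<in> qW \<Sigma> \<and> B \<in> qW \<Sigma>"
  unfolding qle_def by blast

lemma qle_cclass_iff:
  "prime_theory \<Phi> \<Longrightarrow> prime_theory \<Psi> \<Longrightarrow>
    qle \<Sigma> (cclass \<Sigma> \<Phi>) (cclass \<Sigma> \<Psi>) \<longleftrightarrow> cL \<Sigma> \<Phi> = cL \<Sigma> \<Psi> \<and> clab \<Sigma> \<Psi> \<subseteq> clab \<Sigma> \<Phi>"
  unfolding qle_def using cclass_in_qW mem_cclassD cclass_self by metis

lemma qle_cclass_if_subset:
  "prime_theory \<Phi> \<Longrightarrow> prime_theory \<Psi> \<Longrightarrow> \<Phi> \<subseteq> \<Psi> \<Longrightarrow> qle \<Sigma> (cclass \<Sigma> \<Psi>) (cclass \<Sigma> \<Phi>)"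
  using qle_cclass_iff cL_eq_if_comparable[of \<Phi> \<Psi>] unfolding comparable_def clab_def by blast

lemma qle_cclass_supset_rep:
  assumes "prime_theory \<Phi>" "prime_theory \<Psi>" "qle \<Sigma> (cclass \<Sigma> \<Phi>) (cclass \<Sigma> \<Psi>)"
  obtains \<Theta> where "prime_theory \<Theta>" "\<Psi> \<subseteq> \<Theta>" "cclass \<Sigma> \<Theta> = cclass \<Sigma> \<Phi>"
proof -
  have L: "cL \<Sigma> \<Phi> = cL \<Sigma> \<Psi>" and lab: "clab \<Sigma> \<Psi> \<subseteq> clab \<Sigma> \<Phi>"
    using assms qle_cclass_iff by blast+
  then have "clab \<Sigma> \<Phi> \<in> cL \<Sigma> \<Psi>"
    using clab_in_cL[OF assms(1), of \<Sigma>] by simp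
  then obtain \<Theta> where \<Theta>: "prime_theory \<Theta>" "comparable (\<subseteq>) \<Psi> \<Theta>" "clab \<Sigma> \<Theta> = clab \<Sigma> \<Phi>"
    unfolding cL_altdef by blast
  show ?thesis
  proof (cases "\<Psi> \<subseteq> \<Theta>")
    case True
    then show ?thesis
      using that \<Theta> L cL_eq_if_comparable[OF assms(2) \<Theta>(1,2)] cclass_eq_iff[OF \<Theta>(1) assms(1)] by auto
  next
    case False
    then have "clab \<Sigma> \<Psi> = clab \<Sigma> \<Phi>"
      using \<Theta> lab unfolding comparable_def clab_def by blast
    then show ?thesis
      using that assms(1,2) L cclass_eq_iff by blast
  qed
qed

lemma qle_cclass_subset_rep:
  assumes "prime_theory \<Phi>" "prime_theory \<Psi>" "qle \<Sigma> (cclass \<Sigma> \<Phi>) (cclass \<Sigma> \<Psi>)"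
  obtains \<Theta> where "prime_theory \<Theta>" "\<Theta> \<subseteq> \<Phi>" "cclass \<Sigma> \<Theta> = cclass \<Sigma> \<Psi>"
proof -
  have L: "cL \<Sigma> \<Phi> = cL \<Sigma> \<Psi>" and lab: "clab \<Sigma> \<Psi> \<subseteq> clab \<Sigma> \<Phi>"
    using assms qle_cclass_iff by blast+
  then have "clab \<Sigma> \<Psi> \<in> cL \<Sigma> \<Phi>"
    using clab_in_cL[OF assms(2), of \<Sigma>] by simp
  then obtain \<Theta> where \<Theta>: "prime_theory \<Theta>" "comparable (\<subseteq>) \<Phi> \<Theta>" "clab \<Sigma> \<Theta> = clab \<Sigma> \<Psi>"
    unfolding cL_altdef by blast
  show ?thesis
  proof (cases "\<Theta> \<subseteq> \<Phi>")
    case True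
    then show ?thesis
      using that \<Theta> L cL_eq_if_comparable[OF assms(1) \<Theta>(1,2)] cclass_eq_iff[OF \<Theta>(1) assms(2)] by auto
  next
    case False
    then have "clab \<Sigma> \<Psi> = clab \<Sigma> \<Phi>"
      using \<Theta> lab unfolding comparable_def clab_def by blast
    then show ?thesis
      using that assms(1,2) L cclass_eq_iff by blast
  qed
qed

lemma qle_refl: "A \<in> qW \<Sigma> \<Longrightarrow> qle \<Sigma> A A"
  by (erule qWE) (simp add: qle_cclass_iff)

lemma qle_trans: "qle \<Sigma> A B \<Longrightarrow> qle \<Sigma> B C \<Longrightarrow> qle \<Sigma> A C"
proof -
  assume le: "qle \<Sigma> A B" "qle \<Sigma> B C"
  then obtain \<Phi> \<Psi> \<Theta> where "prime_theory \<Phi>" "prime_theory \<Psi>" "prime_theory \<Theta>"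
    "A = cclass \<Sigma> \<Phi>" "B = cclass \<Sigma> \<Psi>" "C = cclass \<Sigma> \<Theta>"
    using qle_in_qW by (meson qWE)
  then show ?thesis
    using le by (simp add: qle_cclass_iff) blast
qed

lemma qle_antisym: "qle \<Sigma> A B \<Longrightarrow> qle \<Sigma> B A \<Longrightarrow> A = B"
proof -
  assume le: "qle \<Sigma> A B" "qle \<Sigma> B A"
  then obtain \<Phi> \<Psi> where "prime_theory \<Phi>" "prime_theory \<Psi>" "A = cclass \<Sigma> \<Phi>" "B = cclass \<Sigma> \<Psi>"
    using qle_in_qW by (meson qWE)
  then show ?thesis
    using le by (simp add: qle_cclass_iff cclass_eq_iff)
qed

lemma qle_comparable_trans:
  assumes "x \<in> qW \<Sigma>" "y \<in> qW \<Sigma>" "z \<in> qW \<Sigma>"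
    and "comparable (qle \<Sigma>) x y" "comparable (qle \<Sigma>) y z"
  shows "comparable (qle \<Sigma>) x z"
proof -
  obtain \<Phi> \<Psi> \<Theta> where reps: "prime_theory \<Phi>" "prime_theory \<Psi>" "prime_theory \<Theta>"
    "x = cclass \<Sigma> \<Phi>" "y = cclass \<Sigma> \<Psi>" "z = cclass \<Sigma> \<Theta>"
    using assms(1-3) by (meson qWE)
  have L: "cL \<Sigma> \<Theta> = cL \<Sigma> \<Phi>"
    using assms(4,5) reps unfolding comparable_def by (auto simp: qle_cclass_iff)
  then have "clab \<Sigma> \<Phi> \<subseteq> clab \<Sigma> \<Theta> \<or> clab \<Sigma> \<Theta> \<subseteq> clab \<Sigma> \<Phi>"
    using cL_linear[OF reps(1)] clab_in_cL reps(1,3) by metis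
  then show ?thesis
    unfolding comparable_def using reps L by (auto simp: qle_cclass_iff)
qed

lemma union_of_linear_posets_qle: "union_of_linear_posets (qW \<Sigma>) (qle \<Sigma>)"
  unfolding union_of_linear_posets_def
proof (intro conjI)
  show "\<forall>x y. qle \<Sigma> x y \<longrightarrow> x \<in> qW \<Sigma> \<and> y \<in> qW \<Sigma>"
    using qle_in_qW by blast
  show "\<forall>x\<in>qW \<Sigma>. qle \<Sigma> x x"
    using qle_refl by blast
  show "\<forall>x\<in>qW \<Sigma>. \<forall>y\<in>qW \<Sigma>. qle \<Sigma> x y \<and> qle \<Sigma> y x \<longrightarrow> x = y"
    using qle_antisym by blast
  show "\<forall>x\<in>qW \<Sigma>. \<forall>y\<in>qW \<Sigma>. \<forall>z\<in>qW \<Sigma>. qle \<Sigma> x y \<and> qle \<Sigma> y z \<longrightarrow> qle \<Sigma> x z"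
    using qle_trans by blast
  show "\<forall>x\<in>qW \<Sigma>. \<forall>y\<in>qW \<Sigma>. \<forall>z\<in>qW \<Sigma>.
      comparable (qle \<Sigma>) x y \<and> comparable (qle \<Sigma>) y z \<longrightarrow> comparable (qle \<Sigma>) x z"
    using qle_comparable_trans by blast
qed

lemma is_type_clab:
  assumes "subformula_closed \<Sigma>" and "prime_theory \<Phi>"
  shows "is_type \<Sigma> (clab \<Sigma> \<Phi>)"
  unfolding is_type_def clab_def
proof (intro conjI allI impI)
  note sub = subformula_closedD[OF assms(1)]
  show "\<Phi> \<inter> \<Sigma> \<subseteq> \<Sigma>"
    by blast
  show "And a b \<in> \<Phi> \<inter> \<Sigma> \<longleftrightarrow> a \<in> \<Phi> \<inter> \<Sigma> \<and> b \<in> \<Phi> \<inter> \<Sigma>" if "And a b \<in> \<Sigma>" for a b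
    using that sub(1) prime_theory_And_iff[OF assms(2)] by blast
  show "Or a b \<in> \<Phi> \<inter> \<Sigma> \<longleftrightarrow> a \<in> \<Phi> \<inter> \<Sigma> \<or> b \<in> \<Phi> \<inter> \<Sigma>" if "Or a b \<in> \<Sigma>" for a b
    using that sub(2) prime_theory_Or_iff[OF assms(2)] by blast
  show "a \<notin> \<Phi> \<inter> \<Sigma> \<or> b \<in> \<Phi> \<inter> \<Sigma>" if "Imp a b \<in> \<Sigma>" "Imp a b \<in> \<Phi> \<inter> \<Sigma>" for a b
    using that sub(3) prime_theory_ImpD[OF assms(2)] by blast
  show "Imp a b \<in> \<Phi> \<inter> \<Sigma>" if "Imp a b \<in> \<Sigma>" "b \<in> \<Phi> \<inter> \<Sigma>" for a b
    using that prime_theory_ImpI[OF assms(2)] by blast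
  show "a \<in> \<Phi> \<inter> \<Sigma>" if "Coimp a b \<in> \<Sigma>" "Coimp a b \<in> \<Phi> \<inter> \<Sigma>" for a b
    using that sub(4) prime_theory_CoimpD[OF assms(2)] by blast
  show "Coimp a b \<in> \<Phi> \<inter> \<Sigma>" if "Coimp a b \<in> \<Sigma>" "a \<in> \<Phi> \<inter> \<Sigma> \<and> b \<notin> \<Phi> \<inter> \<Sigma>" for a b
    using that sub(4) prime_theory_CoimpI[OF assms(2)] by blast
qed

lemma labelled_space_quotient:
  assumes "subformula_closed \<Sigma>"
  shows "labelled_space \<Sigma> (qW \<Sigma>) (qle \<Sigma>) (qlab \<Sigma>)"
  unfolding labelled_space_def
proof (intro conjI ballI allI impI)
  show "union_of_linear_posets (qW \<Sigma>) (qle \<Sigma>)"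
    by (rule union_of_linear_posets_qle)
  show "is_type \<Sigma> (qlab \<Sigma> w)" if "w \<in> qW \<Sigma>" for w
    using that by (metis qWE qlab_cclass is_type_clab[OF assms])
  show "qlab \<Sigma> v \<subseteq> qlab \<Sigma> w" if "w \<in> qW \<Sigma>" "v \<in> qW \<Sigma>" "qle \<Sigma> w v" for w v
    using that by (metis qWE qlab_cclass qle_cclass_iff)
next
  fix w a b assume "w \<in> qW \<Sigma>"
  then obtain \<Phi> where \<Phi>: "prime_theory \<Phi>" "w = cclass \<Sigma> \<Phi>"
    by (rule qWE)
  then have lab: "qlab \<Sigma> w = \<Phi> \<inter> \<Sigma>"
    using qlab_cclass unfolding clab_def by blast
  show "\<exists>v\<in>qW \<Sigma>. qle \<Sigma> v w \<and> a \<in> qlab \<Sigma> v \<and> b \<notin> qlab \<Sigma> v"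
    if "Imp a b \<in> \<Sigma> - qlab \<Sigma> w"
  proof -
    have "Imp a b \<notin> \<Phi>" "a \<in> \<Sigma>" "b \<in> \<Sigma>"
      using that lab subformula_closedD(3)[OF assms] by blast+
    then obtain \<Psi> where "prime_theory \<Psi>" "\<Phi> \<subseteq> \<Psi>" "a \<in> \<Psi>" "b \<notin> \<Psi>"
      using prime_theory_Imp_iff[OF \<Phi>(1)] by blast
    then show ?thesis
      using \<Phi> \<open>a \<in> \<Sigma>\<close> \<open>b \<in> \<Sigma>\<close>
      by (metis cclass_in_qW mem_qlab_cclass_iff qle_cclass_if_subset)
  qed
  show "\<exists>v\<in>qW \<Sigma>. qle \<Sigma> w v \<and> a \<in> qlab \<Sigma> v \<and> b \<notin> qlab \<Sigma> v"
    if "Coimp a b \<in> qlab \<Sigma> w"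
  proof -
    have "Coimp a b \<in> \<Phi>" "a \<in> \<Sigma>" "b \<in> \<Sigma>"
      using that lab subformula_closedD(4)[OF assms] by blast+
    then obtain \<Psi> where "prime_theory \<Psi>" "\<Psi> \<subseteq> \<Phi>" "a \<in> \<Psi>" "b \<notin> \<Psi>"
      using prime_theory_Coimp_iff[OF \<Phi>(1)] by blast
    then show ?thesis
      using \<Phi> \<open>a \<in> \<Sigma>\<close> \<open>b \<in> \<Sigma>\<close>
      by (metis cclass_in_qW mem_qlab_cclass_iff qle_cclass_if_subset)
  qed
qed

section \<open>Formulas defining sets of classes\<close>

text \<open>Recall that \<open>\<Phi> \<le> \<Psi>\<close> means \<open>\<Phi> \<supseteq> \<Psi>\<close>: a prime theory \<open>\<Theta> \<subseteq> \<Psi>\<close> lies above \<open>\<Psi>\<close>.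
  Finiteness of \<open>\<Sigma>\<close> is what makes the formulas below finite.\<close>

definition list_of :: "'a set \<Rightarrow> 'a list" where
  "list_of A = (SOME xs. set xs = A)"

lemma set_list_of: "finite A \<Longrightarrow> set (list_of A) = A"
  unfolding list_of_def using someI_ex[OF finite_list] by blast

definition label_above_fm :: "fm set \<Rightarrow> fm set \<Rightarrow> fm" where
  "label_above_fm \<Sigma> a = Coimp (conjs (list_of a)) (disjs (list_of (\<Sigma> - a)))"

definition no_label_below_fm :: "fm set \<Rightarrow> fm set \<Rightarrow> fm" where
  "no_label_below_fm \<Sigma> a = Imp (conjs (list_of a)) (disjs (list_of (\<Sigma> - a)))"

lemma clab_eq_iff_conjs_disjs:
  assumes "prime_theory \<Theta>" "finite \<Sigma>" "a \<subseteq> \<Sigma>"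
  shows "clab \<Sigma> \<Theta> = a \<longleftrightarrow> conjs (list_of a) \<in> \<Theta> \<and> disjs (list_of (\<Sigma> - a)) \<notin> \<Theta>"
  using prime_theory_conjs_iff[OF assms(1), of "list_of a"] set_list_of[of a]
    prime_theory_disjs_iff[OF assms(1), of "list_of (\<Sigma> - a)"] set_list_of[of "\<Sigma> - a"]
    finite_subset[OF assms(3,2)] assms(2,3)
  unfolding clab_def by auto

lemma label_above_fm_iff:
  assumes "prime_theory \<Psi>" "finite \<Sigma>" "a \<subseteq> \<Sigma>"
  shows "label_above_fm \<Sigma> a \<in> \<Psi> \<longleftrightarrow> (\<exists>\<Theta>. prime_theory \<Theta> \<and> \<Theta> \<subseteq> \<Psi> \<and> clab \<Sigma> \<Theta> = a)"
  unfolding label_above_fm_def prime_theory_Coimp_iff[OF assms(1)]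
  using clab_eq_iff_conjs_disjs[OF _ assms(2,3)] by blast

lemma no_label_below_fm_iff:
  assumes "prime_theory \<Psi>" "finite \<Sigma>" "a \<subseteq> \<Sigma>"
  shows "no_label_below_fm \<Sigma> a \<in> \<Psi> \<longleftrightarrow> \<not> (\<exists>\<Theta>. prime_theory \<Theta> \<and> \<Psi> \<subseteq> \<Theta> \<and> clab \<Sigma> \<Theta> = a)"
  unfolding no_label_below_fm_def prime_theory_Imp_iff[OF assms(1)]
  using clab_eq_iff_conjs_disjs[OF _ assms(2,3)] by blast

text \<open>Going up to some \<open>\<Theta> \<subseteq> \<Psi>\<close> and then down again reaches exactly the prime theories
  comparable with \<open>\<Psi>\<close>, by linearity above \<open>\<Theta>\<close>.\<close>

definition in_cL_fm :: "fm set \<Rightarrow> fm set \<Rightarrow> fm" where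
  "in_cL_fm \<Sigma> b = Coimp top (no_label_below_fm \<Sigma> b)"

lemma in_cL_fm_iff:
  assumes "prime_theory \<Psi>" "finite \<Sigma>" "b \<subseteq> \<Sigma>"
  shows "in_cL_fm \<Sigma> b \<in> \<Psi> \<longleftrightarrow> b \<in> cL \<Sigma> \<Psi>"
proof
  assume "in_cL_fm \<Sigma> b \<in> \<Psi>"
  then obtain \<Theta> where \<Theta>: "prime_theory \<Theta>" "\<Theta> \<subseteq> \<Psi>" "no_label_below_fm \<Sigma> b \<notin> \<Theta>"
    unfolding in_cL_fm_def prime_theory_Coimp_iff[OF assms(1)] by blast
  then obtain \<Theta>' where \<Theta>': "prime_theory \<Theta>'" "\<Theta> \<subseteq> \<Theta>'" "clab \<Sigma> \<Theta>' = b"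
    using no_label_below_fm_iff[OF _ assms(2,3)] by blast
  then have "comparable (\<subseteq>) \<Psi> \<Theta>'"
    using prime_theory_linear_above[OF \<Theta>(1) assms(1) \<Theta>'(1) \<Theta>(2) \<Theta>'(2)] by blast
  then show "b \<in> cL \<Sigma> \<Psi>"
    unfolding cL_altdef using \<Theta>' by blast
next
  assume "b \<in> cL \<Sigma> \<Psi>"
  then obtain \<Theta> where \<Theta>: "prime_theory \<Theta>" "comparable (\<subseteq>) \<Psi> \<Theta>" "clab \<Sigma> \<Theta> = b"
    unfolding cL_altdef by blast
  have "\<exists>\<Theta>'. prime_theory \<Theta>' \<and> \<Theta>' \<subseteq> \<Psi> \<and> no_label_below_fm \<Sigma> b \<notin> \<Theta>'"
  proof (cases "\<Theta> \<subseteq> \<Psi>")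
    case True
    then show ?thesis
      using \<Theta> no_label_below_fm_iff[OF \<Theta>(1) assms(2,3)] by blast
  next
    case False
    then have "\<Psi> \<subseteq> \<Theta>"
      using \<Theta>(2) unfolding comparable_def by blast
    then show ?thesis
      using \<Theta> assms(1) no_label_below_fm_iff[OF assms] by blast
  qed
  then show "in_cL_fm \<Sigma> b \<in> \<Psi>"
    unfolding in_cL_fm_def prime_theory_Coimp_iff[OF assms(1)]
    using prime_theory_top by blast
qed

lemma in_cL_fm_downward:
  assumes "prime_theory \<Psi>" "prime_theory \<Theta>" "\<Psi> \<subseteq> \<Theta>" "finite \<Sigma>" "b \<subseteq> \<Sigma>"
    and "in_cL_fm \<Sigma> b \<in> \<Theta>"
  shows "in_cL_fm \<Sigma> b \<in> \<Psi>"
  using assms in_cL_fm_iff cL_eq_if_comparable[of \<Psi> \<Theta>] unfolding comparable_def by metis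

definition cL_eq_fm :: "fm set \<Rightarrow> fm set set \<Rightarrow> fm" where
  "cL_eq_fm \<Sigma> L =
    conjs (map (\<lambda>b. if b \<in> L then in_cL_fm \<Sigma> b else neg (in_cL_fm \<Sigma> b)) (list_of (Pow \<Sigma>)))"

lemma cL_eq_fm_iff:
  assumes "prime_theory \<Psi>" "finite \<Sigma>" "L \<subseteq> Pow \<Sigma>"
  shows "cL_eq_fm \<Sigma> L \<in> \<Psi> \<longleftrightarrow> cL \<Sigma> \<Psi> = L"
proof -
  have neg_in_cL: "neg (in_cL_fm \<Sigma> b) \<in> \<Psi> \<longleftrightarrow> b \<notin> cL \<Sigma> \<Psi>" if "b \<subseteq> \<Sigma>" for b
    using prime_theory_neg_iff[OF assms(1)] in_cL_fm_downward[OF assms(1) _ _ assms(2) that]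
      in_cL_fm_iff[OF assms(1,2) that] by blast
  have "cL_eq_fm \<Sigma> L \<in> \<Psi> \<longleftrightarrow>
      (\<forall>b\<in>Pow \<Sigma>. (if b \<in> L then in_cL_fm \<Sigma> b else neg (in_cL_fm \<Sigma> b)) \<in> \<Psi>)"
    unfolding cL_eq_fm_def prime_theory_conjs_iff[OF assms(1)] set_map
      set_list_of[OF finite_Pow_iff[THEN iffD2, OF assms(2)]] by blast
  also have "\<dots> \<longleftrightarrow> (\<forall>b\<in>Pow \<Sigma>. b \<in> L \<longleftrightarrow> b \<in> cL \<Sigma> \<Psi>)"
    using in_cL_fm_iff[OF assms(1,2)] neg_in_cL by auto
  also have "\<dots> \<longleftrightarrow> cL \<Sigma> \<Psi> = L"
    using assms(3) cL_subset_Pow[of \<Sigma> \<Psi>] by blast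
  finally show ?thesis .
qed

lemma cL_eq_fm_downward:
  assumes "prime_theory \<Psi>" "prime_theory \<Theta>" "\<Psi> \<subseteq> \<Theta>" "finite \<Sigma>" "L \<subseteq> Pow \<Sigma>"
    and "cL_eq_fm \<Sigma> L \<in> \<Theta>"
  shows "cL_eq_fm \<Sigma> L \<in> \<Psi>"
  using assms cL_eq_fm_iff cL_eq_if_comparable[of \<Psi> \<Theta>] unfolding comparable_def by metis

definition class_above_fm :: "fm set \<Rightarrow> fm set \<Rightarrow> fm set set \<Rightarrow> fm" where
  "class_above_fm \<Sigma> a L = And (cL_eq_fm \<Sigma> L) (label_above_fm \<Sigma> a)"

definition no_class_below_fm :: "fm set \<Rightarrow> fm set \<Rightarrow> fm set set \<Rightarrow> fm" where
  "no_class_below_fm \<Sigma> a L = Or (neg (cL_eq_fm \<Sigma> L)) (no_label_below_fm \<Sigma> a)"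

lemma class_above_fm_iff:
  assumes "prime_theory \<Psi>" "finite \<Sigma>" "a \<subseteq> \<Sigma>" "L \<subseteq> Pow \<Sigma>"
  shows "class_above_fm \<Sigma> a L \<in> \<Psi> \<longleftrightarrow>
    (\<exists>\<Theta>. prime_theory \<Theta> \<and> \<Theta> \<subseteq> \<Psi> \<and> clab \<Sigma> \<Theta> = a \<and> cL \<Sigma> \<Theta> = L)"
proof -
  have "class_above_fm \<Sigma> a L \<in> \<Psi> \<longleftrightarrow>
      cL \<Sigma> \<Psi> = L \<and> (\<exists>\<Theta>. prime_theory \<Theta> \<and> \<Theta> \<subseteq> \<Psi> \<and> clab \<Sigma> \<Theta> = a)"
    unfolding class_above_fm_def prime_theory_And_iff[OF assms(1)]
      cL_eq_fm_iff[OF assms(1,2,4)] label_above_fm_iff[OF assms(1-3)] ..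
  also have "\<dots> \<longleftrightarrow> (\<exists>\<Theta>. prime_theory \<Theta> \<and> \<Theta> \<subseteq> \<Psi> \<and> clab \<Sigma> \<Theta> = a \<and> cL \<Sigma> \<Theta> = L)"
    using cL_eq_if_comparable[OF _ assms(1)] unfolding comparable_def by blast
  finally show ?thesis .
qed

lemma no_class_below_fm_iff:
  assumes "prime_theory \<Psi>" "finite \<Sigma>" "a \<subseteq> \<Sigma>" "L \<subseteq> Pow \<Sigma>"
  shows "no_class_below_fm \<Sigma> a L \<in> \<Psi> \<longleftrightarrow>
    \<not> (\<exists>\<Theta>. prime_theory \<Theta> \<and> \<Psi> \<subseteq> \<Theta> \<and> clab \<Sigma> \<Theta> = a \<and> cL \<Sigma> \<Theta> = L)"
proof -
  have "neg (cL_eq_fm \<Sigma> L) \<in> \<Psi> \<longleftrightarrow> cL \<Sigma> \<Psi> \<noteq> L"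
    using prime_theory_neg_iff[OF assms(1)] cL_eq_fm_downward[OF assms(1) _ _ assms(2,4)]
      cL_eq_fm_iff[OF assms(1,2,4)] by blast
  then have "no_class_below_fm \<Sigma> a L \<in> \<Psi> \<longleftrightarrow>
      cL \<Sigma> \<Psi> \<noteq> L \<or> \<not> (\<exists>\<Theta>. prime_theory \<Theta> \<and> \<Psi> \<subseteq> \<Theta> \<and> clab \<Sigma> \<Theta> = a)"
    unfolding no_class_below_fm_def prime_theory_Or_iff[OF assms(1)]
      no_label_below_fm_iff[OF assms(1-3)] by blast
  also have "\<dots> \<longleftrightarrow> \<not> (\<exists>\<Theta>. prime_theory \<Theta> \<and> \<Psi> \<subseteq> \<Theta> \<and> clab \<Sigma> \<Theta> = a \<and> cL \<Sigma> \<Theta> = L)"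
    using cL_eq_if_comparable[OF assms(1)] unfolding comparable_def by blast
  finally show ?thesis .
qed

text \<open>A class is determined by its label and its \<open>L\<close>-set, so a set of classes is coded by
  finitely many such pairs.\<close>

definition class_codes :: "fm set \<Rightarrow> fm set set set \<Rightarrow> (fm set \<times> fm set set) set" where
  "class_codes \<Sigma> K = {(clab \<Sigma> \<Theta>, cL \<Sigma> \<Theta>) | \<Theta>. prime_theory \<Theta> \<and> cclass \<Sigma> \<Theta> \<in> K}"

lemma class_codesE:
  assumes "p \<in> class_codes \<Sigma> K"
  obtains \<Theta> where "prime_theory \<Theta>" "cclass \<Sigma> \<Theta> \<in> K" "p = (clab \<Sigma> \<Theta>, cL \<Sigma> \<Theta>)"
    "clab \<Sigma> \<Theta> \<subseteq> \<Sigma>" "cL \<Sigma> \<Theta> \<subseteq> Pow \<Sigma>"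
  using assms cL_subset_Pow unfolding class_codes_def clab_def by blast

lemma set_list_of_class_codes: "finite \<Sigma> \<Longrightarrow> set (list_of (class_codes \<Sigma> K)) = class_codes \<Sigma> K"
proof (rule set_list_of)
  have "class_codes \<Sigma> K \<subseteq> Pow \<Sigma> \<times> Pow (Pow \<Sigma>)"
    unfolding class_codes_def clab_def using cL_subset_Pow by blast
  then show "finite \<Sigma> \<Longrightarrow> finite (class_codes \<Sigma> K)"
    by (rule finite_subset) simp
qed

definition classes_above_fm :: "fm set \<Rightarrow> fm set set set \<Rightarrow> fm" where
  "classes_above_fm \<Sigma> K = disjs (map (\<lambda>(a, L). class_above_fm \<Sigma> a L) (list_of (class_codes \<Sigma> K)))"

definition no_classes_below_fm :: "fm set \<Rightarrow> fm set set set \<Rightarrow> fm" where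
  "no_classes_below_fm \<Sigma> K = conjs (map (\<lambda>(a, L). no_class_below_fm \<Sigma> a L) (list_of (class_codes \<Sigma> K)))"

lemma classes_above_fm_iff:
  assumes "prime_theory \<Psi>" "finite \<Sigma>"
  shows "classes_above_fm \<Sigma> K \<in> \<Psi> \<longleftrightarrow> (\<exists>\<Theta>. prime_theory \<Theta> \<and> \<Theta> \<subseteq> \<Psi> \<and> cclass \<Sigma> \<Theta> \<in> K)"
proof -
  have "classes_above_fm \<Sigma> K \<in> \<Psi> \<longleftrightarrow> (\<exists>(a, L)\<in>class_codes \<Sigma> K. class_above_fm \<Sigma> a L \<in> \<Psi>)"
    unfolding classes_above_fm_def prime_theory_disjs_iff[OF assms(1)] set_map
      set_list_of_class_codes[OF assms(2)] by force
  also have "\<dots> \<longleftrightarrow> (\<exists>\<Theta>. prime_theory \<Theta> \<and> \<Theta> \<subseteq> \<Psi> \<and> cclass \<Sigma> \<Theta> \<in> K)"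
  proof
    assume "\<exists>(a, L)\<in>class_codes \<Sigma> K. class_above_fm \<Sigma> a L \<in> \<Psi>"
    then obtain \<Theta>' where \<Theta>': "prime_theory \<Theta>'" "cclass \<Sigma> \<Theta>' \<in> K"
      "class_above_fm \<Sigma> (clab \<Sigma> \<Theta>') (cL \<Sigma> \<Theta>') \<in> \<Psi>" "clab \<Sigma> \<Theta>' \<subseteq> \<Sigma>" "cL \<Sigma> \<Theta>' \<subseteq> Pow \<Sigma>"
      by (auto elim: class_codesE)
    then obtain \<Theta> where "prime_theory \<Theta>" "\<Theta> \<subseteq> \<Psi>" "clab \<Sigma> \<Theta> = clab \<Sigma> \<Theta>'" "cL \<Sigma> \<Theta> = cL \<Sigma> \<Theta>'"
      using \<Theta>'(3) class_above_fm_iff[OF assms \<Theta>'(4,5)] by blast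
    then show "\<exists>\<Theta>. prime_theory \<Theta> \<and> \<Theta> \<subseteq> \<Psi> \<and> cclass \<Sigma> \<Theta> \<in> K"
      using cclass_eq_iff \<Theta>'(1,2) by metis
  next
    assume "\<exists>\<Theta>. prime_theory \<Theta> \<and> \<Theta> \<subseteq> \<Psi> \<and> cclass \<Sigma> \<Theta> \<in> K"
    then obtain \<Theta> where \<Theta>: "prime_theory \<Theta>" "\<Theta> \<subseteq> \<Psi>" "cclass \<Sigma> \<Theta> \<in> K"
      by blast
    then have "(clab \<Sigma> \<Theta>, cL \<Sigma> \<Theta>) \<in> class_codes \<Sigma> K"
      unfolding class_codes_def by blast
    moreover have "clab \<Sigma> \<Theta> \<subseteq> \<Sigma>" "cL \<Sigma> \<Theta> \<subseteq> Pow \<Sigma>"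
      using cL_subset_Pow unfolding clab_def by blast+
    then have "class_above_fm \<Sigma> (clab \<Sigma> \<Theta>) (cL \<Sigma> \<Theta>) \<in> \<Psi>"
      using class_above_fm_iff[OF assms] \<Theta>(1,2) by blast
    ultimately show "\<exists>(a, L)\<in>class_codes \<Sigma> K. class_above_fm \<Sigma> a L \<in> \<Psi>"
      by blast
  qed
  finally show ?thesis .
qed

lemma no_classes_below_fm_iff:
  assumes "prime_theory \<Psi>" "finite \<Sigma>"
  shows "no_classes_below_fm \<Sigma> K \<in> \<Psi> \<longleftrightarrow> \<not> (\<exists>\<Theta>. prime_theory \<Theta> \<and> \<Psi> \<subseteq> \<Theta> \<and> cclass \<Sigma> \<Theta> \<in> K)"
proof -
  have "no_classes_below_fm \<Sigma> K \<in> \<Psi> \<longleftrightarrow> (\<forall>(a, L)\<in>class_codes \<Sigma> K. no_class_below_fm \<Sigma> a L \<in> \<Psi>)"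
    unfolding no_classes_below_fm_def prime_theory_conjs_iff[OF assms(1)] set_map
      set_list_of_class_codes[OF assms(2)] by force
  also have "\<dots> \<longleftrightarrow> \<not> (\<exists>\<Theta>. prime_theory \<Theta> \<and> \<Psi> \<subseteq> \<Theta> \<and> cclass \<Sigma> \<Theta> \<in> K)"
  proof
    assume all: "\<forall>(a, L)\<in>class_codes \<Sigma> K. no_class_below_fm \<Sigma> a L \<in> \<Psi>"
    show "\<not> (\<exists>\<Theta>. prime_theory \<Theta> \<and> \<Psi> \<subseteq> \<Theta> \<and> cclass \<Sigma> \<Theta> \<in> K)"
    proof
      assume "\<exists>\<Theta>. prime_theory \<Theta> \<and> \<Psi> \<subseteq> \<Theta> \<and> cclass \<Sigma> \<Theta> \<in> K"
      then obtain \<Theta> where \<Theta>: "prime_theory \<Theta>" "\<Psi> \<subseteq> \<Theta>" "cclass \<Sigma> \<Theta> \<in> K"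
        by blast
      then have "(clab \<Sigma> \<Theta>, cL \<Sigma> \<Theta>) \<in> class_codes \<Sigma> K"
        unfolding class_codes_def by blast
      then have "no_class_below_fm \<Sigma> (clab \<Sigma> \<Theta>) (cL \<Sigma> \<Theta>) \<in> \<Psi>"
        using all by blast
      moreover have "clab \<Sigma> \<Theta> \<subseteq> \<Sigma>" "cL \<Sigma> \<Theta> \<subseteq> Pow \<Sigma>"
        using cL_subset_Pow unfolding clab_def by blast+
      ultimately show False
        using no_class_below_fm_iff[OF assms] \<Theta> by blast
    qed
  next
    assume none: "\<not> (\<exists>\<Theta>. prime_theory \<Theta> \<and> \<Psi> \<subseteq> \<Theta> \<and> cclass \<Sigma> \<Theta> \<in> K)"
    show "\<forall>(a, L)\<in>class_codes \<Sigma> K. no_class_below_fm \<Sigma> a L \<in> \<Psi>"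
    proof (clarify elim!: class_codesE)
      fix \<Theta>' assume \<Theta>': "prime_theory \<Theta>'" "cclass \<Sigma> \<Theta>' \<in> K" "clab \<Sigma> \<Theta>' \<subseteq> \<Sigma>" "cL \<Sigma> \<Theta>' \<subseteq> Pow \<Sigma>"
      then have "\<not> (\<exists>\<Theta>. prime_theory \<Theta> \<and> \<Psi> \<subseteq> \<Theta> \<and> clab \<Sigma> \<Theta> = clab \<Sigma> \<Theta>' \<and> cL \<Sigma> \<Theta> = cL \<Sigma> \<Theta>')"
        using none cclass_eq_iff by metis
      then show "no_class_below_fm \<Sigma> (clab \<Sigma> \<Theta>') (cL \<Sigma> \<Theta>') \<in> \<Psi>"
        using no_class_below_fm_iff[OF assms \<Theta>'(3,4)] by blast
    qed
  qed
  finally show ?thesis .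
qed

section \<open>Sensibility and \<open>\<omega>\<close>-sensibility along one direction of time\<close>

context temporal_direction
begin

lemma step_clauses:
  assumes N_sub: "\<And>\<phi>. N \<phi> \<in> \<Sigma> \<Longrightarrow> \<phi> \<in> \<Sigma>" and B_sub: "\<And>\<phi>. B \<phi> \<in> \<Sigma> \<Longrightarrow> \<phi> \<in> \<Sigma>"
    and U_sub: "\<And>\<phi> \<psi>. U \<phi> \<psi> \<in> \<Sigma> \<Longrightarrow> \<phi> \<in> \<Sigma> \<and> \<psi> \<in> \<Sigma>"
    and prime: "prime_theory S1" "prime_theory S2" "prime_theory T1" "prime_theory T2"
    and labels: "clab \<Sigma> S1 = l" "clab \<Sigma> S2 = l" "clab \<Sigma> T1 = l'" "clab \<Sigma> T2 = l'"
    and steps: "step S1 \<subseteq> T1" "T2 \<subseteq> step S2"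
  shows "N \<phi> \<in> \<Sigma> \<Longrightarrow> N \<phi> \<in> l \<longleftrightarrow> \<phi> \<in> l'"
    and "B \<phi> \<in> \<Sigma> \<Longrightarrow> B \<phi> \<in> l \<longleftrightarrow> \<phi> \<in> l \<and> B \<phi> \<in> l'"
    and "U \<phi> \<psi> \<in> \<Sigma> \<Longrightarrow> U \<phi> \<psi> \<in> l \<longleftrightarrow> \<psi> \<in> l \<or> (\<phi> \<in> l \<and> U \<phi> \<psi> \<in> l')"
proof -
  have in_S1: "x \<in> l \<longleftrightarrow> x \<in> S1" and in_S2: "x \<in> l \<longleftrightarrow> x \<in> S2"
    and in_T1: "x \<in> l' \<longleftrightarrow> x \<in> T1" and in_T2: "x \<in> l' \<longleftrightarrow> x \<in> T2" if "x \<in> \<Sigma>" for x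
    using labels that unfolding clab_def by blast+
  have forward: "N x \<in> S1 \<Longrightarrow> x \<in> T1" and backward: "x \<in> T2 \<Longrightarrow> N x \<in> S2" for x
    using steps unfolding step_eq by blast+
  show "N \<phi> \<in> l \<longleftrightarrow> \<phi> \<in> l'" if "N \<phi> \<in> \<Sigma>"
    using that N_sub[OF that] in_S1 in_S2 in_T1 in_T2 forward backward by blast
  show "B \<phi> \<in> l \<longleftrightarrow> \<phi> \<in> l \<and> B \<phi> \<in> l'" if B\<phi>: "B \<phi> \<in> \<Sigma>"
  proof
    assume "B \<phi> \<in> l"
    then have "\<phi> \<in> S1" "N (B \<phi>) \<in> S1"
      using in_S1[OF B\<phi>] prime_theory_B_iff[OF prime(1)] by blast+
    then show "\<phi> \<in> l \<and> B \<phi> \<in> l'"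
      using in_S1[OF B_sub[OF B\<phi>]] in_T1[OF B\<phi>] forward by blast
  next
    assume "\<phi> \<in> l \<and> B \<phi> \<in> l'"
    then have "\<phi> \<in> S2" "N (B \<phi>) \<in> S2"
      using in_S2[OF B_sub[OF B\<phi>]] in_T2[OF B\<phi>] backward by blast+
    then show "B \<phi> \<in> l"
      using in_S2[OF B\<phi>] prime_theory_B_iff[OF prime(2)] by blast
  qed
  show "U \<phi> \<psi> \<in> l \<longleftrightarrow> \<psi> \<in> l \<or> (\<phi> \<in> l \<and> U \<phi> \<psi> \<in> l')" if U\<phi>\<psi>: "U \<phi> \<psi> \<in> \<Sigma>"
  proof
    assume "U \<phi> \<psi> \<in> l"
    then have "\<psi> \<in> S1 \<or> (\<phi> \<in> S1 \<and> N (U \<phi> \<psi>) \<in> S1)"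
      using in_S1[OF U\<phi>\<psi>] prime_theory_U_iff[OF prime(1)] by blast
    then show "\<psi> \<in> l \<or> (\<phi> \<in> l \<and> U \<phi> \<psi> \<in> l')"
      using in_S1 in_T1[OF U\<phi>\<psi>] U_sub[OF U\<phi>\<psi>] forward by blast
  next
    assume "\<psi> \<in> l \<or> (\<phi> \<in> l \<and> U \<phi> \<psi> \<in> l')"
    then have "\<psi> \<in> S2 \<or> (\<phi> \<in> S2 \<and> N (U \<phi> \<psi>) \<in> S2)"
      using in_S2 in_T2[OF U\<phi>\<psi>] U_sub[OF U\<phi>\<psi>] backward by blast
    then show "U \<phi> \<psi> \<in> l"
      using in_S2[OF U\<phi>\<psi>] prime_theory_U_iff[OF prime(2)] by blast
  qed
qed

text \<open>In the two lemmas below \<open>K\<close> is a set of classes closed under \<open>step\<close>, such as the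
  classes reachable from a given one. If \<open>B \<phi>\<close> fails at a member of \<open>K\<close>, the formula
  saying ``some class of \<open>K\<close> lies above'' is \<open>N\<close>-invariant and implies \<open>\<phi>\<close> unless \<open>\<phi>\<close>
  fails somewhere in \<open>K\<close>; the induction axiom for \<open>B\<close> then yields \<open>B \<phi>\<close>. Dually for \<open>U\<close>.\<close>

lemma B_witness:
  assumes "finite \<Sigma>" and "prime_theory \<Phi>" "cclass \<Sigma> \<Phi> \<in> K" "B \<phi> \<notin> \<Phi>"
    and step_closed: "\<And>\<Theta>. prime_theory \<Theta> \<Longrightarrow> cclass \<Sigma> \<Theta> \<in> K \<Longrightarrow> cclass \<Sigma> (step \<Theta>) \<in> K"
  shows "\<exists>\<Theta>. prime_theory \<Theta> \<and> cclass \<Sigma> \<Theta> \<in> K \<and> \<phi> \<notin> \<Theta>"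
proof (rule ccontr)
  assume "\<not> ?thesis"
  then have everywhere: "\<phi> \<in> \<Theta>" if "prime_theory \<Theta>" "cclass \<Sigma> \<Theta> \<in> K" for \<Theta>
    using that by blast
  define \<chi> where "\<chi> = classes_above_fm \<Sigma> K"
  have \<chi>_iff: "\<chi> \<in> \<Psi> \<longleftrightarrow> (\<exists>\<Theta>. prime_theory \<Theta> \<and> \<Theta> \<subseteq> \<Psi> \<and> cclass \<Sigma> \<Theta> \<in> K)"
    if "prime_theory \<Psi>" for \<Psi>
    unfolding \<chi>_def using classes_above_fm_iff[OF that assms(1)] .
  have "gtl (Imp \<chi> (N \<chi>))"
  proof (rule gtl_Imp_if_prime_theories)
    fix \<Psi> assume "prime_theory \<Psi>" "\<chi> \<in> \<Psi>"
    then obtain \<Theta> where "prime_theory \<Theta>" "\<Theta> \<subseteq> \<Psi>" "cclass \<Sigma> \<Theta> \<in> K"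
      using \<chi>_iff by blast
    then have "\<chi> \<in> step \<Psi>"
      using \<chi>_iff prime_theory_step \<open>prime_theory \<Psi>\<close> step_mono step_closed by blast
    then show "N \<chi> \<in> \<Psi>"
      unfolding step_eq by simp
  qed
  moreover have "gtl (Imp \<chi> \<phi>)"
    using gtl_Imp_if_prime_theories \<chi>_iff everywhere by blast
  ultimately have "gtl (Imp \<chi> (B \<phi>))"
    using gtl_trans[OF B_induct_rule B_mono] by blast
  moreover have "\<chi> \<in> \<Phi>"
    using \<chi>_iff assms(2,3) by blast
  ultimately show False
    using prime_theory_imp_closed assms(2,4) by blast
qed

lemma U_witness:
  assumes "finite \<Sigma>" and "prime_theory \<Phi>" "cclass \<Sigma> \<Phi> \<in> K" "U \<phi> \<psi> \<in> \<Phi>"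
    and step_closed: "\<And>\<Theta>. prime_theory \<Theta> \<Longrightarrow> cclass \<Sigma> \<Theta> \<in> K \<Longrightarrow> cclass \<Sigma> (step \<Theta>) \<in> K"
  shows "\<exists>\<Theta>. prime_theory \<Theta> \<and> cclass \<Sigma> \<Theta> \<in> K \<and> \<psi> \<in> \<Theta>"
proof (rule ccontr)
  assume "\<not> ?thesis"
  then have nowhere: "\<psi> \<notin> \<Theta>" if "prime_theory \<Theta>" "cclass \<Sigma> \<Theta> \<in> K" for \<Theta>
    using that by blast
  define \<theta> where "\<theta> = no_classes_below_fm \<Sigma> K"
  have \<theta>_iff: "\<theta> \<in> \<Psi> \<longleftrightarrow> \<not> (\<exists>\<Theta>. prime_theory \<Theta> \<and> \<Psi> \<subseteq> \<Theta> \<and> cclass \<Sigma> \<Theta> \<in> K)"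
    if "prime_theory \<Psi>" for \<Psi>
    unfolding \<theta>_def using no_classes_below_fm_iff[OF that assms(1)] .
  have "gtl (Imp \<psi> \<theta>)"
    using gtl_Imp_if_prime_theories \<theta>_iff nowhere by blast
  moreover have "gtl (Imp (And \<phi> (N \<theta>)) \<theta>)"
  proof (rule gtl_Imp_if_prime_theories)
    fix \<Psi> assume \<Psi>: "prime_theory \<Psi>" "And \<phi> (N \<theta>) \<in> \<Psi>"
    then have "\<theta> \<in> step \<Psi>"
      unfolding step_eq using prime_theory_And_iff by blast
    then have "\<not> (\<exists>\<Theta>. prime_theory \<Theta> \<and> \<Psi> \<subseteq> \<Theta> \<and> cclass \<Sigma> \<Theta> \<in> K)"
      using \<theta>_iff prime_theory_step[OF \<Psi>(1)] prime_theory_step step_mono step_closed by blast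
    then show "\<theta> \<in> \<Psi>"
      using \<theta>_iff \<Psi>(1) by blast
  qed
  ultimately have "gtl (Imp (U \<phi> \<psi>) \<theta>)"
    using gtl_trans[OF U_mono_right U_induct_rule] by blast
  then have "\<theta> \<in> \<Phi>"
    using prime_theory_imp_closed assms(2,4) by blast
  then show False
    using \<theta>_iff assms(2,3) by blast
qed

lemma qlab_witnesses:
  assumes "finite \<Sigma>" and B_sub: "\<And>\<phi>. B \<phi> \<in> \<Sigma> \<Longrightarrow> \<phi> \<in> \<Sigma>"
    and U_sub: "\<And>\<phi> \<psi>. U \<phi> \<psi> \<in> \<Sigma> \<Longrightarrow> \<phi> \<in> \<Sigma> \<and> \<psi> \<in> \<Sigma>"
    and \<Phi>: "prime_theory \<Phi>" "cclass \<Sigma> \<Phi> \<in> K"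
    and step_closed: "\<And>\<Theta>. prime_theory \<Theta> \<Longrightarrow> cclass \<Sigma> \<Theta> \<in> K \<Longrightarrow> cclass \<Sigma> (step \<Theta>) \<in> K"
  shows "B \<phi> \<in> \<Sigma> - qlab \<Sigma> (cclass \<Sigma> \<Phi>) \<Longrightarrow> \<exists>v\<in>K. \<phi> \<notin> qlab \<Sigma> v"
    and "U \<phi> \<psi> \<in> qlab \<Sigma> (cclass \<Sigma> \<Phi>) \<Longrightarrow> \<exists>v\<in>K. \<psi> \<in> qlab \<Sigma> v"
proof -
  have lab: "qlab \<Sigma> (cclass \<Sigma> \<Phi>) = \<Phi> \<inter> \<Sigma>"
    using \<Phi>(1) qlab_cclass unfolding clab_def by blast
  show "\<exists>v\<in>K. \<phi> \<notin> qlab \<Sigma> v" if B\<phi>: "B \<phi> \<in> \<Sigma> - qlab \<Sigma> (cclass \<Sigma> \<Phi>)"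
  proof -
    obtain \<Theta> where "prime_theory \<Theta>" "cclass \<Sigma> \<Theta> \<in> K" "\<phi> \<notin> \<Theta>"
      using B_witness[OF assms(1) \<Phi>, of \<phi>] step_closed B\<phi> lab by blast
    then show ?thesis
      using mem_qlab_cclass_iff B_sub B\<phi> by blast
  qed
  show "\<exists>v\<in>K. \<psi> \<in> qlab \<Sigma> v" if U\<phi>\<psi>: "U \<phi> \<psi> \<in> qlab \<Sigma> (cclass \<Sigma> \<Phi>)"
  proof -
    obtain \<Theta> where "prime_theory \<Theta>" "cclass \<Sigma> \<Theta> \<in> K" "\<psi> \<in> \<Theta>"
      using U_witness[OF assms(1) \<Phi>] step_closed U\<phi>\<psi> lab by blast
    then show ?thesis
      using mem_qlab_cclass_iff U_sub U\<phi>\<psi> lab by blast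
  qed
qed

end

section \<open>The relation \<open>R\<^sup>+\<close>\<close>

lemma qR0_iff: "qR0 \<Sigma> A B \<longleftrightarrow> (\<exists>\<Phi>. prime_theory \<Phi> \<and> A = cclass \<Sigma> \<Phi> \<and> B = cclass \<Sigma> (succ_type \<Phi>))"
  unfolding qR0_def Type_inf_eq by blast

lemma qRplusE:
  assumes "qRplus \<Sigma> X Y"
  obtains \<Phi>1 \<Phi>2 where "prime_theory \<Phi>1" "prime_theory \<Phi>2"
    "qle \<Sigma> (cclass \<Sigma> \<Phi>1) X" "qle \<Sigma> X (cclass \<Sigma> \<Phi>2)"
    "qle \<Sigma> (cclass \<Sigma> (succ_type \<Phi>2)) Y" "qle \<Sigma> Y (cclass \<Sigma> (succ_type \<Phi>1))"
  using assms unfolding qRplus_def qR0_iff by blast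

lemma qRplusI:
  assumes "prime_theory \<Phi>1" "prime_theory \<Phi>2"
    "qle \<Sigma> (cclass \<Sigma> \<Phi>1) X" "qle \<Sigma> X (cclass \<Sigma> \<Phi>2)"
    "qle \<Sigma> (cclass \<Sigma> (succ_type \<Phi>2)) Y" "qle \<Sigma> Y (cclass \<Sigma> (succ_type \<Phi>1))"
  shows "qRplus \<Sigma> X Y"
  unfolding qRplus_def qR0_iff using assms by blast

lemma qRplus_in_qW: "qRplus \<Sigma> X Y \<Longrightarrow> X \<in> qW \<Sigma> \<and> Y \<in> qW \<Sigma>"
  by (erule qRplusE) (meson qle_in_qW)

lemma qRplus_succ_type: "prime_theory \<Phi> \<Longrightarrow> qRplus \<Sigma> (cclass \<Sigma> \<Phi>) (cclass \<Sigma> (succ_type \<Phi>))"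
  by (rule qRplusI[of \<Phi> \<Phi>]) (auto intro: qle_refl cclass_in_qW future.prime_theory_step)

lemma qRplus_pred_type: "prime_theory \<Phi> \<Longrightarrow> qRplus \<Sigma> (cclass \<Sigma> (pred_type \<Phi>)) (cclass \<Sigma> \<Phi>)"
  using qRplus_succ_type[OF past.prime_theory_step] succ_pred_type by metis

lemma convex_rel_qRplus: "convex_rel (qW \<Sigma>) (qle \<Sigma>) (qRplus \<Sigma>)"
  unfolding convex_rel_def convex_set_def
proof (intro ballI conjI impI)
  fix x a b c
  assume "a \<in> {y \<in> qW \<Sigma>. qRplus \<Sigma> x y}" "b \<in> qW \<Sigma>" "c \<in> {y \<in> qW \<Sigma>. qRplus \<Sigma> x y}"
    and between: "qle \<Sigma> a b \<and> qle \<Sigma> b c"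
  then obtain \<Phi>1 \<Phi>2 \<Psi>1 \<Psi>2 where "prime_theory \<Psi>1" "prime_theory \<Phi>2"
    "qle \<Sigma> (cclass \<Sigma> \<Psi>1) x" "qle \<Sigma> x (cclass \<Sigma> \<Phi>2)"
    "qle \<Sigma> (cclass \<Sigma> (succ_type \<Phi>2)) a" "qle \<Sigma> c (cclass \<Sigma> (succ_type \<Psi>1))"
    by (blast elim: qRplusE)
  then have "qRplus \<Sigma> x b"
    using between by (blast intro: qRplusI qle_trans)
  then show "b \<in> {y \<in> qW \<Sigma>. qRplus \<Sigma> x y}"
    using \<open>b \<in> qW \<Sigma>\<close> by blast
next
  fix x a b c
  assume "a \<in> {y \<in> qW \<Sigma>. qRplus \<Sigma> y x}" "b \<in> qW \<Sigma>" "c \<in> {y \<in> qW \<Sigma>. qRplus \<Sigma> y x}"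
    and between: "qle \<Sigma> a b \<and> qle \<Sigma> b c"
  then obtain \<Phi>1 \<Phi>2 \<Psi>1 \<Psi>2 where "prime_theory \<Phi>1" "prime_theory \<Psi>2"
    "qle \<Sigma> (cclass \<Sigma> \<Phi>1) a" "qle \<Sigma> c (cclass \<Sigma> \<Psi>2)"
    "qle \<Sigma> (cclass \<Sigma> (succ_type \<Psi>2)) x" "qle \<Sigma> x (cclass \<Sigma> (succ_type \<Phi>1))"
    by (blast elim: qRplusE)
  then have "qRplus \<Sigma> b x"
    using between by (blast intro: qRplusI qle_trans)
  then show "b \<in> {y \<in> qW \<Sigma>. qRplus \<Sigma> y x}"
    using \<open>b \<in> qW \<Sigma>\<close> by blast
qed

lemma qRplus_forth_down:
  assumes "x \<in> qW \<Sigma>" "qle \<Sigma> x x'" "qRplus \<Sigma> x' y'"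
  shows "\<exists>y\<in>qW \<Sigma>. qRplus \<Sigma> x y \<and> qle \<Sigma> y y'"
proof -
  obtain \<Phi> \<Phi>2 where \<Phi>: "prime_theory \<Phi>" "x = cclass \<Sigma> \<Phi>" and \<Phi>2: "prime_theory \<Phi>2"
    "qle \<Sigma> x (cclass \<Sigma> \<Phi>2)" "qle \<Sigma> (cclass \<Sigma> (succ_type \<Phi>2)) y'"
    using assms by (blast elim: qRplusE qWE intro: qle_trans)
  then obtain \<Theta> where \<Theta>: "prime_theory \<Theta>" "\<Phi>2 \<subseteq> \<Theta>" "cclass \<Sigma> \<Theta> = x"
    by (metis qle_cclass_supset_rep)
  then have "qle \<Sigma> (cclass \<Sigma> (succ_type \<Theta>)) (cclass \<Sigma> (succ_type \<Phi>2))"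
    using qle_cclass_if_subset future.prime_theory_step future.step_mono \<Phi>2(1) by blast
  then show ?thesis
    using qRplus_succ_type[OF \<Theta>(1)] \<Theta>(3) \<Phi>2(3) qle_trans qRplus_in_qW by metis
qed

lemma qRplus_forth_up:
  assumes "x' \<in> qW \<Sigma>" "qle \<Sigma> x x'" "qRplus \<Sigma> x y"
  shows "\<exists>y'\<in>qW \<Sigma>. qRplus \<Sigma> x' y' \<and> qle \<Sigma> y y'"
proof -
  obtain \<Phi> \<Phi>1 where \<Phi>: "prime_theory \<Phi>" "x' = cclass \<Sigma> \<Phi>" and \<Phi>1: "prime_theory \<Phi>1"
    "qle \<Sigma> (cclass \<Sigma> \<Phi>1) x'" "qle \<Sigma> y (cclass \<Sigma> (succ_type \<Phi>1))"
    using assms by (blast elim: qRplusE qWE intro: qle_trans)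
  then obtain \<Theta> where \<Theta>: "prime_theory \<Theta>" "\<Theta> \<subseteq> \<Phi>1" "cclass \<Sigma> \<Theta> = x'"
    by (metis qle_cclass_subset_rep)
  then have "qle \<Sigma> (cclass \<Sigma> (succ_type \<Phi>1)) (cclass \<Sigma> (succ_type \<Theta>))"
    using qle_cclass_if_subset future.prime_theory_step future.step_mono \<Phi>1(1) by blast
  then show ?thesis
    using qRplus_succ_type[OF \<Theta>(1)] \<Theta>(3) \<Phi>1(3) qle_trans qRplus_in_qW by metis
qed

lemma qRplus_back_down:
  assumes "y \<in> qW \<Sigma>" "qRplus \<Sigma> x' y'" "qle \<Sigma> y y'"
  shows "\<exists>x\<in>qW \<Sigma>. qle \<Sigma> x x' \<and> qRplus \<Sigma> x y"
proof -
  obtain \<Psi> \<Phi>1 where \<Psi>: "prime_theory \<Psi>" "y = cclass \<Sigma> \<Psi>" and \<Phi>1: "prime_theory \<Phi>1"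
    "qle \<Sigma> (cclass \<Sigma> \<Phi>1) x'" "qle \<Sigma> y (cclass \<Sigma> (succ_type \<Phi>1))"
    using assms by (blast elim: qRplusE qWE intro: qle_trans)
  then obtain \<Theta> where \<Theta>: "prime_theory \<Theta>" "succ_type \<Phi>1 \<subseteq> \<Theta>" "cclass \<Sigma> \<Theta> = y"
    by (metis qle_cclass_supset_rep future.prime_theory_step)
  then have "qle \<Sigma> (cclass \<Sigma> (pred_type \<Theta>)) (cclass \<Sigma> \<Phi>1)"
    using qle_cclass_if_subset past.prime_theory_step succ_type_subset_iff \<Phi>1(1) by blast
  then show ?thesis
    using qRplus_pred_type[OF \<Theta>(1)] \<Theta>(3) \<Phi>1(2) qle_trans qRplus_in_qW by metis
qed

lemma qRplus_back_up:
  assumes "y' \<in> qW \<Sigma>" "qRplus \<Sigma> x y" "qle \<Sigma> y y'"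
  shows "\<exists>x'\<in>qW \<Sigma>. qle \<Sigma> x x' \<and> qRplus \<Sigma> x' y'"
proof -
  obtain \<Psi> \<Phi>2 where \<Psi>: "prime_theory \<Psi>" "y' = cclass \<Sigma> \<Psi>" and \<Phi>2: "prime_theory \<Phi>2"
    "qle \<Sigma> x (cclass \<Sigma> \<Phi>2)" "qle \<Sigma> (cclass \<Sigma> (succ_type \<Phi>2)) y'"
    using assms by (blast elim: qRplusE qWE intro: qle_trans)
  then obtain \<Theta> where \<Theta>: "prime_theory \<Theta>" "\<Theta> \<subseteq> succ_type \<Phi>2" "cclass \<Sigma> \<Theta> = y'"
    by (metis qle_cclass_subset_rep future.prime_theory_step)
  then have "qle \<Sigma> (cclass \<Sigma> \<Phi>2) (cclass \<Sigma> (pred_type \<Theta>))"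
    using qle_cclass_if_subset past.prime_theory_step subset_succ_type_iff \<Phi>2(1) by blast
  then show ?thesis
    using qRplus_pred_type[OF \<Theta>(1)] \<Theta>(3) \<Phi>2(2) qle_trans qRplus_in_qW by metis
qed

lemma fully_confluent_qRplus: "fully_confluent (qW \<Sigma>) (qle \<Sigma>) (qRplus \<Sigma>)"
  unfolding fully_confluent_def
  by (intro conjI ballI impI; elim conjE)
    (blast intro: qRplus_forth_down qRplus_forth_up qRplus_back_down qRplus_back_up)+

lemma bi_serial_qRplus: "bi_serial (qW \<Sigma>) (qRplus \<Sigma>)"
  unfolding bi_serial_def
  by (metis qWE qRplus_succ_type qRplus_pred_type qRplus_in_qW)

lemma qRplus_label_witnesses:
  assumes "qRplus \<Sigma> X Y"
  obtains S1 S2 T1 T2 where "prime_theory S1" "prime_theory S2" "prime_theory T1" "prime_theory T2"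
    "clab \<Sigma> S1 = qlab \<Sigma> X" "clab \<Sigma> S2 = qlab \<Sigma> X" "clab \<Sigma> T1 = qlab \<Sigma> Y" "clab \<Sigma> T2 = qlab \<Sigma> Y"
    "succ_type S1 \<subseteq> T1" "T2 \<subseteq> succ_type S2"
proof -
  obtain \<Phi> \<Psi> where \<Phi>: "prime_theory \<Phi>" "X = cclass \<Sigma> \<Phi>" and \<Psi>: "prime_theory \<Psi>" "Y = cclass \<Sigma> \<Psi>"
    using qRplus_in_qW[OF assms] by (meson qWE)
  obtain \<Phi>1 \<Phi>2 where \<Phi>12: "prime_theory \<Phi>1" "prime_theory \<Phi>2"
    "qle \<Sigma> (cclass \<Sigma> \<Phi>1) X" "qle \<Sigma> X (cclass \<Sigma> \<Phi>2)"
    "qle \<Sigma> (cclass \<Sigma> (succ_type \<Phi>2)) Y" "qle \<Sigma> Y (cclass \<Sigma> (succ_type \<Phi>1))"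
    using assms by (rule qRplusE)
  have succ: "prime_theory (succ_type \<Phi>1)" "prime_theory (succ_type \<Phi>2)"
    using \<Phi>12(1,2) future.prime_theory_step by blast+
  obtain S1 where S1: "prime_theory S1" "S1 \<subseteq> \<Phi>1" "cclass \<Sigma> S1 = X"
    using qle_cclass_subset_rep[OF \<Phi>12(1) \<Phi>(1)] \<Phi>12(3) \<Phi>(2) by metis
  obtain S2 where S2: "prime_theory S2" "\<Phi>2 \<subseteq> S2" "cclass \<Sigma> S2 = X"
    using qle_cclass_supset_rep[OF \<Phi>(1) \<Phi>12(2)] \<Phi>12(4) \<Phi>(2) by metis
  obtain T1 where T1: "prime_theory T1" "succ_type \<Phi>1 \<subseteq> T1" "cclass \<Sigma> T1 = Y"
    using qle_cclass_supset_rep[OF \<Psi>(1) succ(1)] \<Phi>12(6) \<Psi>(2) by metis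
  obtain T2 where T2: "prime_theory T2" "T2 \<subseteq> succ_type \<Phi>2" "cclass \<Sigma> T2 = Y"
    using qle_cclass_subset_rep[OF succ(2) \<Psi>(1)] \<Phi>12(5) \<Psi>(2) by metis
  show ?thesis
  proof (rule that[OF S1(1) S2(1) T1(1) T2(1)])
    show "clab \<Sigma> S1 = qlab \<Sigma> X" "clab \<Sigma> S2 = qlab \<Sigma> X" "clab \<Sigma> T1 = qlab \<Sigma> Y" "clab \<Sigma> T2 = qlab \<Sigma> Y"
      using S1 S2 T1 T2 qlab_cclass by metis+
    show "succ_type S1 \<subseteq> T1" "T2 \<subseteq> succ_type S2"
      using S1(2) S2(2) T1(2) T2(2) future.step_mono by blast+
  qed
qed

lemma sensible_qRplus:
  assumes "subformula_closed \<Sigma>"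
  shows "sensible \<Sigma> (qW \<Sigma>) (qlab \<Sigma>) (qRplus \<Sigma>)"
  unfolding sensible_def
proof (intro ballI impI, goal_cases)
  case (1 w v)
  obtain S1 S2 T1 T2
    where prime: "prime_theory S1" "prime_theory S2" "prime_theory T1" "prime_theory T2"
      and labels: "clab \<Sigma> S1 = qlab \<Sigma> w" "clab \<Sigma> S2 = qlab \<Sigma> w"
        "clab \<Sigma> T1 = qlab \<Sigma> v" "clab \<Sigma> T2 = qlab \<Sigma> v"
      and steps: "succ_type S1 \<subseteq> T1" "T2 \<subseteq> succ_type S2"
    using \<open>qRplus \<Sigma> w v\<close> by (rule qRplus_label_witnesses)
  have past_steps: "pred_type T2 \<subseteq> S2" "S1 \<subseteq> pred_type T1"
    using subset_succ_type_iff[OF prime(2,4)] succ_type_subset_iff[OF prime(1,3)] steps by blast+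
  note sub = subformula_closedD[OF assms]
  note future_clauses = future.step_clauses[OF sub(7) sub(9) sub(5) prime labels steps]
  note past_clauses = past.step_clauses[OF sub(8) sub(10) sub(6) prime(4,3,2,1) labels(4,3,2,1) past_steps]
  show ?case
    by (simp add: future_clauses past_clauses)
qed

lemma qRplus_power_succ_type:
  "(qRplus \<Sigma> ^^ n) w (cclass \<Sigma> \<Theta>) \<Longrightarrow> prime_theory \<Theta> \<Longrightarrow>
    (qRplus \<Sigma> ^^ Suc n) w (cclass \<Sigma> (succ_type \<Theta>))"
  by (rule relpowp_Suc_I[where P = "qRplus \<Sigma>", OF _ qRplus_succ_type])

lemma qRplus_power_pred_type:
  "(qRplus \<Sigma> ^^ n) (cclass \<Sigma> \<Theta>) w \<Longrightarrow> prime_theory \<Theta> \<Longrightarrow>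
    (qRplus \<Sigma> ^^ Suc n) (cclass \<Sigma> (pred_type \<Theta>)) w"
  by (rule relpowp_Suc_I2[where P = "qRplus \<Sigma>", OF qRplus_pred_type])

lemma omega_sensible_qRplus:
  assumes "finite \<Sigma>" and "subformula_closed \<Sigma>"
  shows "omega_sensible \<Sigma> (qW \<Sigma>) (qlab \<Sigma>) (qRplus \<Sigma>)"
  unfolding omega_sensible_def
proof (intro ballI conjI allI impI)
  fix w assume "w \<in> qW \<Sigma>"
  then obtain \<Phi> where \<Phi>: "prime_theory \<Phi>" "w = cclass \<Sigma> \<Phi>"
    by (rule qWE)
  define Fut where "Fut = {C \<in> qW \<Sigma>. \<exists>n. (qRplus \<Sigma> ^^ n) w C}"
  define Past where "Past = {C \<in> qW \<Sigma>. \<exists>n. (qRplus \<Sigma> ^^ n) C w}"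
  have "w \<in> Fut" "w \<in> Past"
    unfolding Fut_def Past_def using \<open>w \<in> qW \<Sigma>\<close> relpowp_0_I[of "qRplus \<Sigma>" w] by blast+
  then have start: "cclass \<Sigma> \<Phi> \<in> Fut" "cclass \<Sigma> \<Phi> \<in> Past"
    unfolding \<Phi>(2) .
  have Fut_closed: "cclass \<Sigma> (succ_type \<Theta>) \<in> Fut"
    if "prime_theory \<Theta>" "cclass \<Sigma> \<Theta> \<in> Fut" for \<Theta>
    using that qRplus_power_succ_type cclass_in_qW future.prime_theory_step
    unfolding Fut_def by blast
  have Past_closed: "cclass \<Sigma> (pred_type \<Theta>) \<in> Past"
    if "prime_theory \<Theta>" "cclass \<Sigma> \<Theta> \<in> Past" for \<Theta>
    using that qRplus_power_pred_type cclass_in_qW past.prime_theory_step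
    unfolding Past_def by blast
  note sub = subformula_closedD[OF assms(2)]
  note future_witnesses = future.qlab_witnesses[OF assms(1) sub(9) sub(5) \<Phi>(1) start(1)]
  note past_witnesses = past.qlab_witnesses[OF assms(1) sub(10) sub(6) \<Phi>(1) start(2)]
  show "\<exists>v\<in>qW \<Sigma>. \<exists>n. (qRplus \<Sigma> ^^ n) w v \<and> \<phi> \<notin> qlab \<Sigma> v" if "TG \<phi> \<in> \<Sigma> - qlab \<Sigma> w" for \<phi>
    using future_witnesses(1) Fut_closed that \<Phi>(2) unfolding Fut_def by blast
  show "\<exists>v\<in>qW \<Sigma>. \<exists>n. (qRplus \<Sigma> ^^ n) v w \<and> \<phi> \<notin> qlab \<Sigma> v" if "TH \<phi> \<in> \<Sigma> - qlab \<Sigma> w" for \<phi>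
    using past_witnesses(1) Past_closed that \<Phi>(2) unfolding Past_def by blast
  show "\<exists>v\<in>qW \<Sigma>. \<exists>n. (qRplus \<Sigma> ^^ n) w v \<and> \<psi> \<in> qlab \<Sigma> v" if "TU \<phi> \<psi> \<in> qlab \<Sigma> w" for \<phi> \<psi>
    using future_witnesses(2) Fut_closed that \<Phi>(2) unfolding Fut_def by blast
  show "\<exists>v\<in>qW \<Sigma>. \<exists>n. (qRplus \<Sigma> ^^ n) v w \<and> \<psi> \<in> qlab \<Sigma> v" if "TS \<phi> \<psi> \<in> qlab \<Sigma> w" for \<phi> \<psi>
    using past_witnesses(2) Past_closed that \<Phi>(2) unfolding Past_def by blast
qed

theorem corollary10p3:
  assumes "finite \<Sigma>" and "subformula_closed \<Sigma>"
  shows "quasimodel \<Sigma> (qW \<Sigma>) (qle \<Sigma>) (qlab \<Sigma>) (qRplus \<Sigma>)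
         \<and> omega_sensible \<Sigma> (qW \<Sigma>) (qlab \<Sigma>) (qRplus \<Sigma>)"
proof -
  have "labelled_system \<Sigma> (qW \<Sigma>) (qle \<Sigma>) (qlab \<Sigma>) (qRplus \<Sigma>)"
    unfolding labelled_system_def
    using labelled_space_quotient[OF assms(2)] qRplus_in_qW convex_rel_qRplus
      fully_confluent_qRplus bi_serial_qRplus sensible_qRplus[OF assms(2)] by blast
  moreover have "omega_sensible \<Sigma> (qW \<Sigma>) (qlab \<Sigma>) (qRplus \<Sigma>)"
    using omega_sensible_qRplus[OF assms] .
  ultimately show ?thesis
    unfolding quasimodel_def by blast
qed

end
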